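(* A graph $G=(V,E)$ is chordal if and only if $\mathcal{P}_{x,y}(G)$ equals the set of $(x,y)\in\mathbb{R}^V\times\mathbb{R}^E$ satisfying \begin{align*} y(\delta(v)) &\le x_v && \text{for all } v\in V,\\ -y_e &\le 0 && \text{for all } e\in E,\\ x(K)-y(E(K)) &\le 1 && \text{for all maximal cliques } K \text{ of } G. \end{align*}
   Context: All graphs are simple and connected. A graph is chordal if it contains no induced cycle (hole) of length at least 4. For $W\subseteq V$, $E(W)$ is the set of edges with both endpoints in $W$, $\delta(v)$ is the set of edges incident to $v$, and $x(A)=\sum_{a\in A}x_a$. A co-2-plex of $G$ is a set $S\subseteq V$ such that $G[S]$ has maximum degree at most 1. $\mathcal{P}_{x,y}(G)=\mathrm{conv}\{(\chi^S,\zeta^{E(S)}) : S \text{ co-2-plex of } G\}$, where $\chi^S\in\{0,1\}^V$, $\zeta^{F}\in\{0,1\}^E$ are incidence vectors. *)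

theory Defs
  imports Main "HOL-Library.Indicator_Function"
begin

definition simple_graph :: "'a set \<Rightarrow> 'a set set \<Rightarrow> bool" where
  "simple_graph V E \<longleftrightarrow> finite V \<and>
     (\<forall>e\<in>E. \<exists>u v. u \<noteq> v \<and> u \<in> V \<and> v \<in> V \<and> e = {u, v})"

definition connected_graph :: "'a set \<Rightarrow> 'a set set \<Rightarrow> bool" where
  "connected_graph V E \<longleftrightarrow> V \<noteq> {} \<and>
     (\<forall>u\<in>V. \<forall>v\<in>V. (\<lambda>a b. {a, b} \<in> E)\<^sup>*\<^sup>* u v)"

definition has_hole :: "'a set \<Rightarrow> 'a set set \<Rightarrow> bool" where
  "has_hole V E \<longleftrightarrow> (\<exists>k::nat. \<exists>f::nat \<Rightarrow> 'a. k \<ge> 4 \<and> inj_on f {..<k} \<and> f ` {..<k} \<subseteq> V \<and>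
     (\<forall>i<k. \<forall>j<k. {f i, f j} \<in> E \<longleftrightarrow> (j = Suc i mod k \<or> i = Suc j mod k)))"

definition chordal :: "'a set \<Rightarrow> 'a set set \<Rightarrow> bool" where
  "chordal V E \<longleftrightarrow> \<not> has_hole V E"

definition clique :: "'a set \<Rightarrow> 'a set set \<Rightarrow> 'a set \<Rightarrow> bool" where
  "clique V E K \<longleftrightarrow> K \<subseteq> V \<and> (\<forall>u\<in>K. \<forall>v\<in>K. u \<noteq> v \<longrightarrow> {u, v} \<in> E)"

definition maximal_clique :: "'a set \<Rightarrow> 'a set set \<Rightarrow> 'a set \<Rightarrow> bool" where
  "maximal_clique V E K \<longleftrightarrow> clique V E K \<and> (\<forall>K'. clique V E K' \<and> K \<subseteq> K' \<longrightarrow> K' = K)"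

definition edges_in :: "'a set set \<Rightarrow> 'a set \<Rightarrow> 'a set set" where
  "edges_in E W = {e \<in> E. e \<subseteq> W}"

definition delta :: "'a set set \<Rightarrow> 'a \<Rightarrow> 'a set set" where
  "delta E v = {e \<in> E. v \<in> e}"

definition co_2_plex :: "'a set \<Rightarrow> 'a set set \<Rightarrow> 'a set \<Rightarrow> bool" where
  "co_2_plex V E S \<longleftrightarrow> S \<subseteq> V \<and> (\<forall>v\<in>S. card {u \<in> S. {u, v} \<in> E} \<le> 1)"

text \<open>Points of R^V x R^E are pairs of functions (zero outside V resp. E).
  P_{x,y}(G) is the convex hull of the incidence vectors (chi^S, zeta^{E(S)}),
  written out as the set of convex combinations of these finitely many points.\<close>
definition P_xy :: "'a set \<Rightarrow> 'a set set \<Rightarrow> (('a \<Rightarrow> real) \<times> ('a set \<Rightarrow> real)) set" where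
  "P_xy V E = {(x, y). \<exists>lam :: 'a set \<Rightarrow> real.
     (\<forall>S. co_2_plex V E S \<longrightarrow> lam S \<ge> 0) \<and>
     (\<Sum>S\<in>{S. co_2_plex V E S}. lam S) = 1 \<and>
     x = (\<lambda>v. \<Sum>S\<in>{S. co_2_plex V E S}. lam S * indicator S v) \<and>
     y = (\<lambda>e. \<Sum>S\<in>{S. co_2_plex V E S}. lam S * indicator (edges_in E S) e)}"

definition clique_polyhedron :: "'a set \<Rightarrow> 'a set set \<Rightarrow> (('a \<Rightarrow> real) \<times> ('a set \<Rightarrow> real)) set" where
  "clique_polyhedron V E = {(x, y).
     (\<forall>v. v \<notin> V \<longrightarrow> x v = 0) \<and> (\<forall>e. e \<notin> E \<longrightarrow> y e = 0) \<and>
     (\<forall>v\<in>V. (\<Sum>e\<in>delta E v. y e) \<le> x v) \<and>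
     (\<forall>e\<in>E. - y e \<le> 0) \<and>
     (\<forall>K. maximal_clique V E K \<longrightarrow> (\<Sum>v\<in>K. x v) - (\<Sum>e\<in>edges_in E K. y e) \<le> 1)}"

end

theory Submission
  imports Defs
begin

text \<open>Evaluated at the incidence vector of a co-2-plex \<open>S\<close>, the left-hand side of the clique
  inequality for \<open>K\<close> is the indicator of \<open>K \<inter> S \<noteq> {}\<close>, and the slack of the degree inequality
  at \<open>u\<close> is the indicator of \<open>u\<close> being isolated in \<open>S\<close>; hence \<open>P_xy\<close> lies in the clique
  polyhedron \<open>Q\<close>.

  If \<open>G\<close> has a hole, a point of \<open>Q\<close> supported on the hole is not in \<open>P_xy\<close>: for an odd hole
  \<open>x = 1/2\<close> on its vertices and \<open>y = 0\<close>; for an even one \<open>x = 1\<close> at one hole vertex \<open>f 0\<close>,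
  \<open>x = 1/2\<close> at the others and \<open>y = 1/2\<close> on the two hole edges at \<open>f 0\<close>.  Every co-2-plex
  in a decomposition of such a point would contain exactly one end of each hole edge not at
  \<open>f 0\<close> (and, in the even case, \<open>f 0\<close> and exactly one of its hole neighbours), which parity forbids.

  Conversely, a chordal graph has a simplicial vertex \<open>v\<close>.  A point of \<open>Q(G)\<close> restricts to a point
  of \<open>Q(G - v)\<close>, which by induction is a convex combination of co-2-plexes of \<open>G - v\<close>.  Adding \<open>v\<close>
  to these co-2-plexes with suitable probabilities recovers the point: the clique inequality for
  the closed neighbourhood of \<open>v\<close> and the degree inequalities at the neighbours of \<open>v\<close> say that
  there are enough co-2-plexes to which \<open>v\<close> can be added.\<close>

section \<open>Simple graphs and co-2-plexes\<close>

lemma simple_graph_finite: "simple_graph V E \<Longrightarrow> finite V"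
  by (simp add: simple_graph_def)

lemma simple_graph_edgeE:
  assumes "simple_graph V E" "e \<in> E"
  obtains u w where "u \<noteq> w" "u \<in> V" "w \<in> V" "e = {u, w}"
  using assms by (auto simp: simple_graph_def)

lemma simple_graph_edges_subset: "simple_graph V E \<Longrightarrow> E \<subseteq> Pow V"
  by (auto elim: simple_graph_edgeE)

lemma simple_graph_finite_edges: "simple_graph V E \<Longrightarrow> finite E"
  by (meson finite_Pow_iff finite_subset simple_graph_edges_subset simple_graph_finite)

lemma simple_graph_singleton_notin:
  assumes "simple_graph V E"
  shows "{u} \<notin> E"
proof
  assume "{u} \<in> E"
  then obtain a b where "a \<noteq> b" "{u} = {a, b}" by (rule simple_graph_edgeE[OF assms])
  then show False by (auto simp: doubleton_eq_iff)
qed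

lemma simple_graph_adj_in_V: "simple_graph V E \<Longrightarrow> {u, w} \<in> E \<Longrightarrow> u \<in> V \<and> w \<in> V"
  using simple_graph_edges_subset by blast

lemma edges_in_doubleton_iff: "{u, w} \<in> edges_in E W \<longleftrightarrow> {u, w} \<in> E \<and> u \<in> W \<and> w \<in> W"
  by (auto simp: edges_in_def)

lemma simple_graph_edges_in_le_1:
  assumes "simple_graph V E" "finite W" "card W \<le> 1"
  shows "edges_in E W = {}"
proof -
  have no_pair: "\<not> {u, w} \<subseteq> W" if "u \<noteq> w" for u w
    using that assms(2,3) card_mono[of W "{u, w}"] by auto
  have False if "e \<in> E" "e \<subseteq> W" for e
    using assms(1) that(1) by (rule simple_graph_edgeE) (use no_pair that(2) in blast)
  then show ?thesis by (auto simp: edges_in_def)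
qed

lemma simple_graph_edges_in_pair:
  assumes "simple_graph V E" "{u, w} \<in> E"
  shows "edges_in E {u, w} = {{u, w}}"
proof -
  have "e = {u, w}" if "e \<in> E" "e \<subseteq> {u, w}" for e
    using assms(1) that by (elim simple_graph_edgeE) auto
  then show ?thesis using assms(2) by (auto simp: edges_in_def)
qed

lemma finite_co_2_plexes: "simple_graph V E \<Longrightarrow> finite {S. co_2_plex V E S}"
  by (rule finite_subset[of _ "Pow V"]) (auto simp: co_2_plex_def simple_graph_finite)

lemma co_2_plex_finite: "simple_graph V E \<Longrightarrow> co_2_plex V E S \<Longrightarrow> finite S"
  by (meson co_2_plex_def finite_subset simple_graph_finite)

lemma co_2_plex_two_neighbours:
  assumes "simple_graph V E" "co_2_plex V E S" "w \<in> S" "t \<in> S" "u \<in> S"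
    "{t, w} \<in> E" "{u, w} \<in> E"
  shows "t = u"
proof -
  have "{t, u} \<subseteq> {s \<in> S. {s, w} \<in> E}" using assms(4-7) by auto
  then have "card {t, u} \<le> card {s \<in> S. {s, w} \<in> E}"
    using co_2_plex_finite[OF assms(1,2)] by (intro card_mono) auto
  also have "\<dots> \<le> 1" using assms(2,3) by (auto simp: co_2_plex_def)
  finally show ?thesis by (cases "t = u") auto
qed

lemma edges_in_edges_in: "S \<subseteq> W \<Longrightarrow> edges_in (edges_in E W) S = edges_in E S"
  by (auto simp: edges_in_def)

lemma co_2_plex_induced_iff:
  assumes "S \<subseteq> W" "W \<subseteq> V"
  shows "co_2_plex W (edges_in E W) S \<longleftrightarrow> co_2_plex V E S"
proof -
  have "{u \<in> S. {u, w} \<in> edges_in E W} = {u \<in> S. {u, w} \<in> E}" if "w \<in> S" for w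
    using assms that by (auto simp: edges_in_doubleton_iff)
  then show ?thesis using assms by (auto simp: co_2_plex_def)
qed

text \<open>A clique meets a co-2-plex in at most one edge.\<close>
lemma clique_co_2_plex_count:
  assumes sg: "simple_graph V E" and S: "co_2_plex V E S" and K: "clique V E K"
  shows "real (card (K \<inter> S)) - real (card (edges_in E K \<inter> edges_in E S))
           = (if K \<inter> S = {} then 0 else 1)"
proof -
  have edges: "edges_in E K \<inter> edges_in E S = edges_in E (K \<inter> S)"
    by (auto simp: edges_in_def)
  have fin: "finite (K \<inter> S)" using co_2_plex_finite[OF sg S] by simp
  show ?thesis
  proof (cases "card (K \<inter> S) \<le> 1")
    case True
    then have "card (K \<inter> S) = (if K \<inter> S = {} then 0 else 1)"
      using card_0_eq[OF fin] by (auto simp: le_Suc_eq)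
    then show ?thesis
      using simple_graph_edges_in_le_1[OF sg fin True] by (simp add: edges)
  next
    case False
    then obtain u w where uw: "u \<in> K \<inter> S" "w \<in> K \<inter> S" "u \<noteq> w"
      using card_le_Suc0_iff_eq[OF fin] by auto
    have adj: "{p, q} \<in> E" if "p \<in> K \<inter> S" "q \<in> K \<inter> S" "p \<noteq> q" for p q
      using K that by (auto simp: clique_def)
    have "z \<in> {u, w}" if z: "z \<in> K \<inter> S" for z
    proof (rule ccontr)
      assume "z \<notin> {u, w}"
      then have "z = w"
        using co_2_plex_two_neighbours[OF sg S, of u z w] z uw adj[of z u] adj[of w u] by auto
      then show False using \<open>z \<notin> {u, w}\<close> by simp
    qed
    then have "K \<inter> S = {u, w}" using uw by blast
    then show ?thesis
      using uw simple_graph_edges_in_pair[OF sg adj[OF uw]] by (simp add: edges)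
  qed
qed

definition isolated_in :: "'a set set \<Rightarrow> 'a set \<Rightarrow> 'a \<Rightarrow> bool" where
  "isolated_in E S u \<longleftrightarrow> u \<in> S \<and> (\<forall>t\<in>S. {t, u} \<notin> E)"

lemma delta_inter_edges_in:
  assumes "simple_graph V E" "u \<in> S"
  shows "delta E u \<inter> edges_in E S = (\<lambda>t. {t, u}) ` {t \<in> S. {t, u} \<in> E}"
proof -
  have "e \<in> (\<lambda>t. {t, u}) ` {t \<in> S. {t, u} \<in> E}" if "e \<in> E" "u \<in> e" "e \<subseteq> S" for e
  proof -
    obtain p q where "p \<noteq> q" "e = {p, q}" using assms(1) \<open>e \<in> E\<close> by (rule simple_graph_edgeE)
    then obtain t where "e = {t, u}" using \<open>u \<in> e\<close> by (auto simp: insert_commute)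
    then show ?thesis using that by blast
  qed
  moreover have "{t, u} \<in> delta E u \<inter> edges_in E S" if "t \<in> S" "{t, u} \<in> E" for t
    using that assms(2) by (simp add: delta_def edges_in_def)
  ultimately show ?thesis by (auto simp: delta_def edges_in_def)
qed

lemma degree_co_2_plex_count:
  assumes sg: "simple_graph V E" and S: "co_2_plex V E S"
  shows "indicator S u - real (card (delta E u \<inter> edges_in E S))
           = (if isolated_in E S u then 1 else 0)"
proof (cases "u \<in> S")
  case False
  then have "delta E u \<inter> edges_in E S = {}" by (auto simp: delta_def edges_in_def)
  then show ?thesis using False by (simp add: isolated_in_def)
next
  case True
  let ?N = "{t \<in> S. {t, u} \<in> E}"
  have "inj_on (\<lambda>t. {t, u}) ?N"
    using simple_graph_singleton_notin[OF sg] by (auto simp: inj_on_def doubleton_eq_iff)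
  then have "card (delta E u \<inter> edges_in E S) = card ?N"
    by (simp add: delta_inter_edges_in[OF sg True] card_image)
  moreover have "card ?N \<le> 1" using S True by (auto simp: co_2_plex_def)
  moreover have "isolated_in E S u \<longleftrightarrow> card ?N = 0"
    using True co_2_plex_finite[OF sg S] by (auto simp: isolated_in_def)
  ultimately show ?thesis using True by (cases "card ?N = 0") auto
qed

section \<open>Convex combinations of co-2-plexes\<close>

abbreviation co_2_plexes :: "'a set \<Rightarrow> 'a set set \<Rightarrow> 'a set set" where
  "co_2_plexes V E \<equiv> {S. co_2_plex V E S}"

definition convex_weights :: "'b set \<Rightarrow> ('b \<Rightarrow> real) \<Rightarrow> bool" where
  "convex_weights C lam \<longleftrightarrow> (\<forall>S\<in>C. 0 \<le> lam S) \<and> sum lam C = 1"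

definition vertex_mix :: "'a set set \<Rightarrow> ('a set \<Rightarrow> real) \<Rightarrow> 'a \<Rightarrow> real" where
  "vertex_mix C lam v = (\<Sum>S\<in>C. lam S * indicator S v)"

definition edge_mix :: "'a set set \<Rightarrow> 'a set set \<Rightarrow> ('a set \<Rightarrow> real) \<Rightarrow> 'a set \<Rightarrow> real" where
  "edge_mix E C lam e = (\<Sum>S\<in>C. lam S * indicator (edges_in E S) e)"

lemma mem_P_xy_iff:
  "(x, y) \<in> P_xy V E \<longleftrightarrow> (\<exists>lam. convex_weights (co_2_plexes V E) lam \<and>
     x = vertex_mix (co_2_plexes V E) lam \<and> y = edge_mix E (co_2_plexes V E) lam)"
  by (auto simp: P_xy_def convex_weights_def vertex_mix_def[abs_def] edge_mix_def[abs_def])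

lemma mem_P_xyE:
  assumes "(x, y) \<in> P_xy V E"
  obtains lam where "convex_weights (co_2_plexes V E) lam"
    "x = vertex_mix (co_2_plexes V E) lam" "y = edge_mix E (co_2_plexes V E) lam"
  using assms by (auto simp: mem_P_xy_iff)

lemma indexed_mix_in_P_xy:
  assumes sg: "simple_graph V E" and I: "finite I" and w: "convex_weights I w"
    and T: "\<And>i. i \<in> I \<Longrightarrow> w i \<noteq> 0 \<Longrightarrow> co_2_plex V E (T i)"
  shows "((\<lambda>v. \<Sum>i\<in>I. w i * indicator (T i) v),
          (\<lambda>e. \<Sum>i\<in>I. w i * indicator (edges_in E (T i)) e)) \<in> P_xy V E"
proof -
  let ?C = "co_2_plexes V E" and ?J = "{i \<in> I. w i \<noteq> 0}"
  define lam where "lam S = (\<Sum>i\<in>{i \<in> ?J. T i = S}. w i)" for S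
  have J: "finite ?J" "T ` ?J \<subseteq> ?C" using I T by auto
  have regroup: "(\<Sum>S\<in>?C. lam S * g S) = (\<Sum>i\<in>I. w i * g (T i))" for g :: "'a set \<Rightarrow> real"
  proof -
    have "(\<Sum>S\<in>?C. lam S * g S) = (\<Sum>S\<in>?C. \<Sum>i\<in>{i \<in> ?J. T i = S}. w i * g (T i))"
      by (auto simp: lam_def sum_distrib_right intro!: sum.cong)
    also have "\<dots> = (\<Sum>i\<in>?J. w i * g (T i))"
      using J(1) finite_co_2_plexes[OF sg] J(2) by (rule sum.group)
    also have "\<dots> = (\<Sum>i\<in>I. w i * g (T i))"
      using I by (intro sum.mono_neutral_left) auto
    finally show ?thesis .
  qed
  have "convex_weights ?C lam"
    using w regroup[of "\<lambda>_. 1"] by (auto simp: convex_weights_def lam_def intro!: sum_nonneg)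
  then show ?thesis
    unfolding mem_P_xy_iff using regroup
    by (intro exI[of _ lam]) (simp add: vertex_mix_def edge_mix_def fun_eq_iff)
qed

lemma incidence_in_P_xy:
  assumes "simple_graph V E" "co_2_plex V E S"
  shows "(indicator S, indicator (edges_in E S)) \<in> P_xy V E"
  using indexed_mix_in_P_xy[OF assms(1), of "{S}" "\<lambda>_. 1" id] assms(2)
  by (simp add: convex_weights_def fun_eq_iff)

text \<open>The point is obtained from the combination \<open>lam\<close> by adding \<open>v\<close> to each \<open>S\<close> with
  probability \<open>c S\<close>.\<close>
lemma insert_mix_in_P_xy:
  fixes c :: "'a set \<Rightarrow> real"
  assumes sg: "simple_graph V E" and C: "finite C" "\<forall>S\<in>C. co_2_plex V E S"
    and lam: "convex_weights C lam" and c: "\<forall>S\<in>C. 0 \<le> c S \<and> c S \<le> 1"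
    and insert: "\<forall>S\<in>C. c S \<noteq> 0 \<longrightarrow> co_2_plex V E (insert v S)"
  shows "((\<lambda>u. vertex_mix C lam u
            + (\<Sum>S\<in>C. lam S * c S * (indicator (insert v S) u - indicator S u))),
          (\<lambda>e. edge_mix E C lam e + (\<Sum>S\<in>C. lam S * c S *
             (indicator (edges_in E (insert v S)) e - indicator (edges_in E S) e)))) \<in> P_xy V E"
proof -
  define w where "w = (\<lambda>(S, b). lam S * (if b then c S else 1 - c S))"
  define T where "T = (\<lambda>(S, b). if b then insert v S else S)"
  have split: "(\<Sum>i\<in>C \<times> UNIV. w i * g (T i))
      = (\<Sum>S\<in>C. lam S * g S) + (\<Sum>S\<in>C. lam S * c S * (g (insert v S) - g S))" for g :: "'a set \<Rightarrow> real"
    by (simp add: w_def T_def sum.cartesian_product' UNIV_bool sum.distrib[symmetric] algebra_simps)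
  have "convex_weights (C \<times> UNIV) w"
    using lam c split[of "\<lambda>_. 1"] by (auto simp: convex_weights_def w_def)
  moreover have "co_2_plex V E (T i)" if "i \<in> C \<times> UNIV" "w i \<noteq> 0" for i
    using that C(2) insert by (auto simp: w_def T_def)
  ultimately have "((\<lambda>u. \<Sum>i\<in>C \<times> UNIV. w i * indicator (T i) u),
      (\<lambda>e. \<Sum>i\<in>C \<times> UNIV. w i * indicator (edges_in E (T i)) e)) \<in> P_xy V E"
    using C(1) by (intro indexed_mix_in_P_xy[OF sg]) auto
  moreover have "(\<Sum>i\<in>C \<times> UNIV. w i * indicator (T i) u)
      = vertex_mix C lam u + (\<Sum>S\<in>C. lam S * c S * (indicator (insert v S) u - indicator S u))" for u
    using split[of "\<lambda>S. indicator S u"] by (simp add: vertex_mix_def)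
  moreover have "(\<Sum>i\<in>C \<times> UNIV. w i * indicator (edges_in E (T i)) e)
      = edge_mix E C lam e + (\<Sum>S\<in>C. lam S * c S *
          (indicator (edges_in E (insert v S)) e - indicator (edges_in E S) e))" for e
    using split[of "\<lambda>S. indicator (edges_in E S) e"] by (simp add: edge_mix_def)
  ultimately show ?thesis by simp
qed

lemma sum_indicator_real: "finite A \<Longrightarrow> (\<Sum>x\<in>A. indicator B x :: real) = real (card (A \<inter> B))"
  using sum_indicator_mult[where f = "\<lambda>x. 1 :: real" and A = A and B = B] by simp

lemma sum_vertex_mix:
  "finite A \<Longrightarrow> (\<Sum>v\<in>A. vertex_mix C lam v) = (\<Sum>S\<in>C. lam S * real (card (A \<inter> S)))"
  unfolding vertex_mix_def
  by (subst sum.swap) (simp add: sum_distrib_left[symmetric] sum_indicator_real)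

lemma sum_edge_mix:
  "finite F \<Longrightarrow> (\<Sum>e\<in>F. edge_mix E C lam e) = (\<Sum>S\<in>C. lam S * real (card (F \<inter> edges_in E S)))"
  unfolding edge_mix_def
  by (subst sum.swap) (simp add: sum_distrib_left[symmetric] sum_indicator_real)

lemma clique_functional_mix:
  assumes sg: "simple_graph V E" and C: "\<forall>S\<in>C. co_2_plex V E S" and K: "clique V E K"
  shows "(\<Sum>v\<in>K. vertex_mix C lam v) - (\<Sum>e\<in>edges_in E K. edge_mix E C lam e)
           = (\<Sum>S\<in>C. if K \<inter> S = {} then 0 else lam S)"
proof -
  have "finite K" "finite (edges_in E K)"
    using K simple_graph_finite[OF sg] simple_graph_finite_edges[OF sg]
    by (auto simp: clique_def edges_in_def intro: finite_subset)
  then have "(\<Sum>v\<in>K. vertex_mix C lam v) - (\<Sum>e\<in>edges_in E K. edge_mix E C lam e)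
      = (\<Sum>S\<in>C. lam S * (real (card (K \<inter> S)) - real (card (edges_in E K \<inter> edges_in E S))))"
    by (simp add: sum_vertex_mix sum_edge_mix sum_subtractf right_diff_distrib)
  also have "\<dots> = (\<Sum>S\<in>C. if K \<inter> S = {} then 0 else lam S)"
    using clique_co_2_plex_count[OF sg _ K] C by (intro sum.cong) auto
  finally show ?thesis .
qed

lemma degree_functional_mix:
  assumes sg: "simple_graph V E" and C: "\<forall>S\<in>C. co_2_plex V E S"
  shows "vertex_mix C lam u - (\<Sum>e\<in>delta E u. edge_mix E C lam e)
           = (\<Sum>S\<in>C. if isolated_in E S u then lam S else 0)"
proof -
  have "finite (delta E u)" using simple_graph_finite_edges[OF sg] by (simp add: delta_def)
  then have "vertex_mix C lam u - (\<Sum>e\<in>delta E u. edge_mix E C lam e)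
      = (\<Sum>S\<in>C. lam S * (indicator S u - real (card (delta E u \<inter> edges_in E S))))"
    by (simp add: vertex_mix_def sum_edge_mix sum_subtractf right_diff_distrib)
  also have "\<dots> = (\<Sum>S\<in>C. if isolated_in E S u then lam S else 0)"
    using degree_co_2_plex_count[OF sg] C by (intro sum.cong) auto
  finally show ?thesis .
qed

lemma P_xy_subset_clique_polyhedron:
  assumes sg: "simple_graph V E"
  shows "P_xy V E \<subseteq> clique_polyhedron V E"
proof safe
  fix x y assume "(x, y) \<in> P_xy V E"
  then obtain lam where lam: "convex_weights (co_2_plexes V E) lam"
    and x: "x = vertex_mix (co_2_plexes V E) lam" and y: "y = edge_mix E (co_2_plexes V E) lam"
    by (rule mem_P_xyE)
  let ?C = "co_2_plexes V E"
  have C: "\<forall>S\<in>?C. co_2_plex V E S" by simp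
  have lam0: "\<forall>S\<in>?C. 0 \<le> lam S" and lam1: "sum lam ?C = 1"
    using lam by (auto simp: convex_weights_def)
  have "x v = 0" if "v \<notin> V" for v
    using that by (auto simp: x vertex_mix_def co_2_plex_def indicator_def intro!: sum.neutral)
  moreover have "y e = 0" if "e \<notin> E" for e
    using that by (auto simp: y edge_mix_def edges_in_def intro!: sum.neutral)
  moreover have "(\<Sum>e\<in>delta E v. y e) \<le> x v" for v
  proof -
    have "0 \<le> (\<Sum>S\<in>?C. if isolated_in E S v then lam S else 0)"
      using lam0 by (intro sum_nonneg) auto
    then show ?thesis using degree_functional_mix[OF sg C, of lam v] by (simp add: x y)
  qed
  moreover have "0 \<le> y e" for e
    using lam0 by (auto simp: y edge_mix_def intro!: sum_nonneg)
  moreover have "(\<Sum>v\<in>K. x v) - (\<Sum>e\<in>edges_in E K. y e) \<le> 1" if "maximal_clique V E K" for K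
  proof -
    have "(\<Sum>S\<in>?C. if K \<inter> S = {} then 0 else lam S) \<le> sum lam ?C"
      using lam0 by (intro sum_mono) auto
    then show ?thesis
      using that lam1 clique_functional_mix[OF sg C, of K lam]
      by (simp add: x y maximal_clique_def)
  qed
  ultimately show "(x, y) \<in> clique_polyhedron V E"
    by (simp add: clique_polyhedron_def)
qed

lemma convex_weights_tight:
  fixes g :: "'b \<Rightarrow> real"
  assumes "finite C" "convex_weights C lam" "\<forall>S\<in>C. g S \<le> 1"
    and "(\<Sum>S\<in>C. lam S * g S) = 1" "S \<in> C" "0 < lam S"
  shows "g S = 1"
proof (rule ccontr)
  assume "g S \<noteq> 1"
  then have "lam S * g S < lam S * 1" using assms(3,5,6) by force
  moreover have "\<forall>S\<in>C. lam S * g S \<le> lam S * 1"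
    using assms(2,3) by (auto simp: convex_weights_def intro: mult_left_le)
  ultimately have "(\<Sum>S\<in>C. lam S * g S) < (\<Sum>S\<in>C. lam S * 1)"
    using assms(1,5) by (intro sum_strict_mono_ex1) auto
  then show False using assms(2,4) by (simp add: convex_weights_def)
qed

lemma convex_weights_pos:
  assumes "finite C" "convex_weights C lam"
  obtains S where "S \<in> C" "0 < lam S"
proof -
  have "\<not> (\<forall>S\<in>C. lam S \<le> 0)"
    using assms sum_nonpos[of C lam] by (auto simp: convex_weights_def)
  then show ?thesis using that by force
qed

lemma mix_exactly_one_endpoint:
  assumes sg: "simple_graph V E" and lam: "convex_weights (co_2_plexes V E) lam"
    and uw: "{u, w} \<in> E" and y: "edge_mix E (co_2_plexes V E) lam {u, w} = 0"
    and x: "vertex_mix (co_2_plexes V E) lam u + vertex_mix (co_2_plexes V E) lam w = 1"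
    and S: "co_2_plex V E S" "0 < lam S"
  shows "u \<in> S \<longleftrightarrow> w \<notin> S"
proof -
  define g :: "'a set \<Rightarrow> real"
    where "g T = indicator T u + indicator T w - 2 * indicator (edges_in E T) {u, w}" for T
  have "(\<Sum>T\<in>co_2_plexes V E. lam T * g T) = vertex_mix (co_2_plexes V E) lam u
      + vertex_mix (co_2_plexes V E) lam w - 2 * edge_mix E (co_2_plexes V E) lam {u, w}"
    by (simp add: g_def vertex_mix_def edge_mix_def right_diff_distrib distrib_left sum.distrib
        sum_subtractf sum_distrib_left mult.left_commute)
  then have "(\<Sum>T\<in>co_2_plexes V E. lam T * g T) = 1" using x y by simp
  moreover have "g T \<le> 1" for T
    using uw by (auto simp: g_def indicator_def edges_in_def)
  ultimately have "g S = 1"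
    using convex_weights_tight[OF finite_co_2_plexes[OF sg] lam] S by auto
  then show ?thesis
    using uw by (cases "u \<in> S"; cases "w \<in> S") (simp_all add: g_def edges_in_def)
qed

lemma mix_exactly_one_edge:
  assumes sg: "simple_graph V E" and lam: "convex_weights (co_2_plexes V E) lam"
    and E: "{u, w} \<in> E" "{u, t} \<in> E" "w \<noteq> t"
    and y: "edge_mix E (co_2_plexes V E) lam {u, w} + edge_mix E (co_2_plexes V E) lam {u, t} = 1"
    and S: "co_2_plex V E S" "0 < lam S"
  shows "u \<in> S \<and> (w \<in> S \<longleftrightarrow> t \<notin> S)"
proof -
  define g :: "'a set \<Rightarrow> real"
    where "g T = indicator (edges_in E T) {u, w} + indicator (edges_in E T) {u, t}" for T
  have "(\<Sum>T\<in>co_2_plexes V E. lam T * g T) = 1"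
    using y by (simp add: g_def edge_mix_def algebra_simps sum.distrib)
  moreover have "g T \<le> 1" if "co_2_plex V E T" for T
    using co_2_plex_two_neighbours[OF sg that, of u w t] E
    by (auto simp: g_def indicator_def edges_in_def insert_commute)
  ultimately have "g S = 1"
    using convex_weights_tight[OF finite_co_2_plexes[OF sg] lam] S by auto
  then show ?thesis
    using E by (cases "u \<in> S"; cases "w \<in> S"; cases "t \<in> S") (simp_all add: g_def edges_in_def)
qed

section \<open>Holes\<close>

lemma alternating_parity:
  fixes b :: "nat \<Rightarrow> bool"
  assumes "\<forall>i<m. b i \<noteq> b (Suc i)"
  shows "b m = b 0 \<longleftrightarrow> even m"
  using assms by (induction m) auto

lemma cyclic_succ_iff:
  fixes i j k :: nat
  assumes "i < k" "j < k"
  shows "(j = Suc i mod k \<or> i = Suc j mod k) \<longleftrightarrow>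
    (j = Suc i \<or> i = Suc j \<or> (i = 0 \<and> j = k - 1) \<or> (j = 0 \<and> i = k - 1))"
proof -
  have "Suc i mod k = (if Suc i = k then 0 else Suc i)"
    and "Suc j mod k = (if Suc j = k then 0 else Suc j)"
    using assms by (simp_all add: mod_Suc)
  then show ?thesis using assms by auto
qed

locale hole =
  fixes V :: "'a set" and E :: "'a set set" and f :: "nat \<Rightarrow> 'a" and k :: nat
  assumes simple: "simple_graph V E" and four_le_k: "4 \<le> k" and inj: "inj_on f {..<k}"
    and on_V: "f ` {..<k} \<subseteq> V"
    and adj: "\<forall>i<k. \<forall>j<k. {f i, f j} \<in> E \<longleftrightarrow> (j = Suc i mod k \<or> i = Suc j mod k)"

lemma has_hole_iff: "simple_graph V E \<Longrightarrow> has_hole V E \<longleftrightarrow> (\<exists>f k. hole V E f k)"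
  by (auto simp: has_hole_def hole_def)

context hole
begin

lemma adj_iff:
  "i < k \<Longrightarrow> j < k \<Longrightarrow> {f i, f j} \<in> E \<longleftrightarrow>
     (j = Suc i \<or> i = Suc j \<or> (i = 0 \<and> j = k - 1) \<or> (j = 0 \<and> i = k - 1))"
  using adj cyclic_succ_iff by simp

lemma f_eq_iff: "i < k \<Longrightarrow> j < k \<Longrightarrow> f i = f j \<longleftrightarrow> i = j"
  using inj by (auto dest: inj_onD)

lemma cycle_edge: "i < k \<Longrightarrow> {f i, f (Suc i mod k)} \<in> E"
  using adj four_le_k by simp

lemma no_triangle:
  assumes "i < k" "j < k" "l < k" "i \<noteq> j" "i \<noteq> l" "j \<noteq> l"
    and "{f i, f j} \<in> E" "{f i, f l} \<in> E" "{f j, f l} \<in> E"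
  shows False
  using assms four_le_k by (simp add: adj_iff) (elim disjE conjE; linarith)

lemma clique_inter_hole:
  assumes K: "clique V E K"
  obtains i where "i < k" "K \<inter> f ` {..<k} \<subseteq> {f i, f (Suc i mod k)}"
proof (cases "\<exists>i<k. \<exists>j<k. i \<noteq> j \<and> f i \<in> K \<and> f j \<in> K")
  case True
  then obtain i j where ij: "i < k" "j < k" "i \<noteq> j" "f i \<in> K" "f j \<in> K" by blast
  have edge_in: "{f p, f q} \<in> E" if "p < k" "q < k" "p \<noteq> q" "f p \<in> K" "f q \<in> K" for p q
    using K that f_eq_iff by (auto simp: clique_def)
  have "K \<inter> f ` {..<k} \<subseteq> {f i, f j}"
    using no_triangle[OF ij(1,2) _ ij(3)] edge_in ij by fastforce
  moreover have "j = Suc i mod k \<or> i = Suc j mod k"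
    using adj edge_in[OF ij] ij(1,2) by blast
  ultimately show ?thesis
    using that ij(1,2) by (metis insert_commute)
next
  case False
  have "\<exists>i<k. K \<inter> f ` {..<k} \<subseteq> {f i}"
  proof (cases "K \<inter> f ` {..<k} = {}")
    case True
    then show ?thesis using four_le_k by (intro exI[of _ 0]) auto
  next
    case nonempty: False
    then obtain i where "i < k" "f i \<in> K" by auto
    then show ?thesis using False by blast
  qed
  then show ?thesis using that by blast
qed

lemma clique_ineq_if_supported_on_hole:
  fixes x :: "'a \<Rightarrow> real" and y :: "'a set \<Rightarrow> real"
  assumes x_supp: "\<forall>v. v \<notin> f ` {..<k} \<longrightarrow> x v = 0"
    and x_nonneg: "\<forall>v. 0 \<le> x v" and y_nonneg: "\<forall>e. 0 \<le> y e"
    and x_le: "\<forall>i<k. x (f i) \<le> 1"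
    and edge_le: "\<forall>i<k. x (f i) + x (f (Suc i mod k)) - y {f i, f (Suc i mod k)} \<le> 1"
    and K: "clique V E K"
  shows "(\<Sum>v\<in>K. x v) - (\<Sum>e\<in>edges_in E K. y e) \<le> 1"
proof -
  obtain i where i: "i < k" and sub: "K \<inter> f ` {..<k} \<subseteq> {f i, f (Suc i mod k)}"
    using clique_inter_hole[OF K] .
  define p q where "p = f i" and "q = f (Suc i mod k)"
  have "Suc i mod k \<noteq> i" using i four_le_k by (cases "Suc i = k") auto
  then have pq: "p \<noteq> q" "{p, q} \<in> E" using i cycle_edge f_eq_iff by (auto simp: p_def q_def)
  have finK: "finite K"
    using K simple_graph_finite[OF simple] by (auto simp: clique_def intro: finite_subset)
  have finEK: "finite (edges_in E K)"
    using simple_graph_finite_edges[OF simple] by (simp add: edges_in_def)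
  have "x v = 0" if "v \<in> K" "v \<notin> {p, q}" for v
  proof -
    have "v \<notin> f ` {..<k}" using sub that by (auto simp: p_def q_def)
    then show ?thesis using x_supp by simp
  qed
  then have "(\<Sum>v\<in>K. x v) = (\<Sum>v\<in>K \<inter> {p, q}. x v)"
    using finK by (intro sum.mono_neutral_right) auto
  also have "\<dots> = (if p \<in> K then x p else 0) + (if q \<in> K then x q else 0)"
    using pq by (cases "p \<in> K"; cases "q \<in> K") (auto simp: Int_insert_right)
  finally have sum_x: "(\<Sum>v\<in>K. x v) = (if p \<in> K then x p else 0) + (if q \<in> K then x q else 0)" .
  have y_sum: "(if p \<in> K \<and> q \<in> K then y {p, q} else 0) \<le> (\<Sum>e\<in>edges_in E K. y e)"
    using pq finEK y_nonneg by (auto simp: edges_in_def intro!: member_le_sum sum_nonneg)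
  have "x p \<le> 1" "x q \<le> 1" "x p + x q - y {p, q} \<le> 1"
    using x_le edge_le i four_le_k by (auto simp: p_def q_def)
  moreover have "0 \<le> (\<Sum>e\<in>edges_in E K. y e)" using y_nonneg by (simp add: sum_nonneg)
  ultimately show ?thesis
    using sum_x y_sum x_nonneg by (cases "p \<in> K"; cases "q \<in> K") auto
qed

definition odd_x :: "'a \<Rightarrow> real" where
  "odd_x v = (if v \<in> f ` {..<k} then 1/2 else 0)"

lemma odd_point_in_clique_polyhedron: "(odd_x, \<lambda>_. 0) \<in> clique_polyhedron V E"
proof -
  have "(\<Sum>v\<in>K. odd_x v) - (\<Sum>e\<in>edges_in E K. 0) \<le> 1" if "clique V E K" for K
    using that by (intro clique_ineq_if_supported_on_hole) (auto simp: odd_x_def)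
  then show ?thesis
    using on_V by (auto simp: clique_polyhedron_def odd_x_def maximal_clique_def)
qed

lemma odd_point_notin_P_xy:
  assumes "odd k"
  shows "(odd_x, \<lambda>_. 0) \<notin> P_xy V E"
proof
  assume "(odd_x, \<lambda>_. 0) \<in> P_xy V E"
  then obtain lam where lam: "convex_weights (co_2_plexes V E) lam"
    and x: "odd_x = vertex_mix (co_2_plexes V E) lam"
    and y: "(\<lambda>_. 0) = edge_mix E (co_2_plexes V E) lam"
    by (rule mem_P_xyE)
  obtain S where S: "co_2_plex V E S" "0 < lam S"
    using convex_weights_pos[OF finite_co_2_plexes[OF simple] lam] by auto
  have alt: "f i \<in> S \<longleftrightarrow> f (Suc i mod k) \<notin> S" if "i < k" for i
  proof (rule mix_exactly_one_endpoint[OF simple lam cycle_edge[OF that] _ _ S])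
    show "edge_mix E (co_2_plexes V E) lam {f i, f (Suc i mod k)} = 0"
      by (simp flip: y)
    have "Suc i mod k < k" using four_le_k by simp
    then show "vertex_mix (co_2_plexes V E) lam (f i)
        + vertex_mix (co_2_plexes V E) lam (f (Suc i mod k)) = 1"
      using that by (simp flip: x add: odd_x_def)
  qed
  have "\<forall>i<k - 1. (f i \<in> S) \<noteq> (f (Suc i) \<in> S)"
  proof (intro allI impI)
    fix i assume "i < k - 1"
    then show "(f i \<in> S) \<noteq> (f (Suc i) \<in> S)" using alt[of i] by simp
  qed
  then have "(f (k - 1) \<in> S) = (f 0 \<in> S)"
    using alternating_parity[of "k - 1" "\<lambda>i. f i \<in> S"] assms four_le_k by simp
  moreover have "Suc (k - 1) mod k = 0" using four_le_k by simp
  ultimately show False using alt[of "k - 1"] four_le_k by simp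
qed

definition even_x :: "'a \<Rightarrow> real" where
  "even_x v = (if v = f 0 then 1 else if v \<in> f ` {..<k} then 1/2 else 0)"

definition even_y :: "'a set \<Rightarrow> real" where
  "even_y e = (if e = {f 0, f 1} \<or> e = {f 0, f (k - 1)} then 1/2 else 0)"

lemma f0_neighbours:
  shows "f 0 \<noteq> f 1" "f 0 \<noteq> f (k - 1)" "f 1 \<noteq> f (k - 1)"
    and "{f 0, f 1} \<in> E" "{f 0, f (k - 1)} \<in> E"
  using f_eq_iff[of 0 1] f_eq_iff[of 0 "k - 1"] f_eq_iff[of 1 "k - 1"]
    adj_iff[of 0 1] adj_iff[of 0 "k - 1"] four_le_k by auto

lemma even_y_delta:
  "(\<Sum>e\<in>delta E v. even_y e)
     = (if v \<in> {f 0, f 1} then 1/2 else 0) + (if v \<in> {f 0, f (k - 1)} then 1/2 else 0)"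
proof -
  have "finite (delta E v)" using simple_graph_finite_edges[OF simple] by (simp add: delta_def)
  moreover have "even_y e
      = (if e = {f 0, f 1} then 1/2 else 0) + (if e = {f 0, f (k - 1)} then 1/2 else 0)" for e
    using f0_neighbours by (auto simp: even_y_def doubleton_eq_iff)
  ultimately show ?thesis
    using f0_neighbours by (simp add: sum.distrib delta_def)
qed

lemma even_point_in_clique_polyhedron: "(even_x, even_y) \<in> clique_polyhedron V E"
proof -
  have H: "f 0 \<in> f ` {..<k}" "f 1 \<in> f ` {..<k}" "f (k - 1) \<in> f ` {..<k}" using four_le_k by auto
  have "even_x v = 0" if "v \<notin> V" for v
    using that on_V H(1) by (auto simp: even_x_def)
  moreover have "even_y e = 0" if "e \<notin> E" for e
    using that f0_neighbours by (auto simp: even_y_def)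
  moreover have "(\<Sum>e\<in>delta E v. even_y e) \<le> even_x v" for v
    using f0_neighbours H by (auto simp: even_y_delta even_x_def)
  moreover have edge_bound:
    "even_x (f i) + even_x (f (Suc i mod k)) - even_y {f i, f (Suc i mod k)} \<le> 1"
    if i: "i < k" for i
  proof -
    consider "i = 0" | "i = k - 1" | "0 < i" "Suc i < k" using i by linarith
    then show ?thesis
    proof cases
      case 1
      then show ?thesis using f0_neighbours four_le_k by (simp add: even_x_def even_y_def)
    next
      case 2
      then show ?thesis
        using f0_neighbours four_le_k by (simp add: even_x_def even_y_def insert_commute)
    next
      case 3
      then show ?thesis
        using f_eq_iff[of i 0] f_eq_iff[of "Suc i" 0] by (simp add: even_x_def even_y_def)
    qed
  qed
  moreover have "(\<Sum>v\<in>K. even_x v) - (\<Sum>e\<in>edges_in E K. even_y e) \<le> 1" if "clique V E K" for K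
  proof (rule clique_ineq_if_supported_on_hole[OF _ _ _ _ _ that])
    show "\<forall>i<k. even_x (f i) + even_x (f (Suc i mod k)) - even_y {f i, f (Suc i mod k)} \<le> 1"
      using edge_bound by blast
  qed (use H(1) in \<open>auto simp: even_x_def even_y_def\<close>)
  ultimately show ?thesis
    by (auto simp: clique_polyhedron_def even_y_def maximal_clique_def)
qed

lemma even_point_notin_P_xy:
  assumes "even k"
  shows "(even_x, even_y) \<notin> P_xy V E"
proof
  assume "(even_x, even_y) \<in> P_xy V E"
  then obtain lam where lam: "convex_weights (co_2_plexes V E) lam"
    and x: "even_x = vertex_mix (co_2_plexes V E) lam"
    and y: "even_y = edge_mix E (co_2_plexes V E) lam"
    by (rule mem_P_xyE)
  obtain S where S: "co_2_plex V E S" "0 < lam S"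
    using convex_weights_pos[OF finite_co_2_plexes[OF simple] lam] by auto
  have alt: "f i \<in> S \<longleftrightarrow> f (Suc i) \<notin> S" if "0 < i" "Suc i < k" for i
  proof (rule mix_exactly_one_endpoint[OF simple lam _ _ _ S])
    show "{f i, f (Suc i)} \<in> E" using that adj_iff by simp
    have "f i \<noteq> f 0" "f (Suc i) \<noteq> f 0" using that f_eq_iff by auto
    then show "edge_mix E (co_2_plexes V E) lam {f i, f (Suc i)} = 0"
      by (auto simp flip: y simp: even_y_def doubleton_eq_iff)
    show "vertex_mix (co_2_plexes V E) lam (f i) + vertex_mix (co_2_plexes V E) lam (f (Suc i)) = 1"
      using that \<open>f i \<noteq> f 0\<close> \<open>f (Suc i) \<noteq> f 0\<close> by (simp flip: x add: even_x_def)
  qed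
  have "f 1 \<in> S \<longleftrightarrow> f (k - 1) \<notin> S"
    using mix_exactly_one_edge[OF simple lam f0_neighbours(4,5,3) _ S] f0_neighbours
    by (simp flip: y add: even_y_def)
  moreover have "\<forall>i<k - 2. (f (Suc i) \<in> S) \<noteq> (f (Suc (Suc i)) \<in> S)"
  proof (intro allI impI)
    fix i assume "i < k - 2"
    then show "(f (Suc i) \<in> S) \<noteq> (f (Suc (Suc i)) \<in> S)" using alt[of "Suc i"] by simp
  qed
  then have "(f (Suc (k - 2)) \<in> S) = (f 1 \<in> S)"
    using alternating_parity[of "k - 2" "\<lambda>i. f (Suc i) \<in> S"] assms four_le_k by simp
  moreover have "Suc (k - 2) = k - 1" using four_le_k by simp
  ultimately show False by simp
qed

lemma P_xy_neq_clique_polyhedron: "P_xy V E \<noteq> clique_polyhedron V E"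
  using odd_point_in_clique_polyhedron odd_point_notin_P_xy
    even_point_in_clique_polyhedron even_point_notin_P_xy by (cases "even k") auto

end

section \<open>Simplicial vertices of chordal graphs\<close>

lemma simple_graph_induced:
  assumes "simple_graph V E" "W \<subseteq> V"
  shows "simple_graph W (edges_in E W)"
  unfolding simple_graph_def
proof (intro conjI ballI)
  show "finite W" using assms simple_graph_finite finite_subset by blast
  fix e assume "e \<in> edges_in E W"
  then have "e \<in> E" "e \<subseteq> W" by (auto simp: edges_in_def)
  then show "\<exists>u v. u \<noteq> v \<and> u \<in> W \<and> v \<in> W \<and> e = {u, v}"
    using assms(1) by (elim simple_graph_edgeE) auto
qed

lemma has_hole_induced:
  assumes "has_hole W (edges_in E W)" "W \<subseteq> V"
  shows "has_hole V E"
proof -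
  obtain k f where "4 \<le> k" "inj_on f {..<k}" "f ` {..<k} \<subseteq> W"
    and adj: "\<forall>i<k. \<forall>j<k. {f i, f j} \<in> edges_in E W \<longleftrightarrow> (j = Suc i mod k \<or> i = Suc j mod k)"
    using assms(1) unfolding has_hole_def by blast
  moreover have "{f i, f j} \<in> edges_in E W \<longleftrightarrow> {f i, f j} \<in> E" if "i < k" "j < k" for i j
    using that \<open>f ` {..<k} \<subseteq> W\<close> by (auto simp: edges_in_doubleton_iff)
  ultimately show ?thesis
    using assms(2) unfolding has_hole_def by (intro exI[of _ k] exI[of _ f]) auto
qed

definition walk_via :: "'a set set \<Rightarrow> 'a set \<Rightarrow> 'a \<Rightarrow> 'a \<Rightarrow> (nat \<Rightarrow> 'a) \<Rightarrow> nat \<Rightarrow> bool" where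
  "walk_via E C s t p m \<longleftrightarrow> p 0 = s \<and> p m = t \<and> (\<forall>i<m. {p i, p (Suc i)} \<in> E) \<and>
     (\<forall>i. 0 < i \<and> i < m \<longrightarrow> p i \<in> C)"

lemma walk_via_shortcut:
  assumes w: "walk_via E C s t p m" and d: "i + d < m" and e: "{p i, p (Suc (i + d))} \<in> E"
  shows "walk_via E C s t (\<lambda>x. if x \<le> i then p x else p (x + d)) (m - d)"
  unfolding walk_via_def
proof (intro conjI allI impI)
  fix x assume "x < m - d"
  then show "{if x \<le> i then p x else p (x + d), if Suc x \<le> i then p (Suc x) else p (Suc x + d)} \<in> E"
    using w e by (cases "x < i"; cases "x = i") (auto simp: walk_via_def)
next
  fix x assume "0 < x \<and> x < m - d"
  then show "(if x \<le> i then p x else p (x + d)) \<in> C"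
    using w d by (auto simp: walk_via_def)
qed (use w d in \<open>auto simp: walk_via_def\<close>)

lemma walk_via_truncate: "walk_via E C s t p m \<Longrightarrow> i \<le> m \<Longrightarrow> p i = t \<Longrightarrow> walk_via E C s t p i"
  by (auto simp: walk_via_def)

lemma shortest_walk_via_induced:
  assumes w: "walk_via E C s t p m" and shortest: "\<And>q n. walk_via E C s t q n \<Longrightarrow> m \<le> n"
  shows shortest_walk_via_distinct: "\<And>i j. i < j \<Longrightarrow> j \<le> m \<Longrightarrow> p i \<noteq> p j"
    and shortest_walk_via_chordless: "\<And>i j. Suc i < j \<Longrightarrow> j \<le> m \<Longrightarrow> {p i, p j} \<notin> E"
proof -
  fix i j assume ij: "Suc i < j" "j \<le> m"
  show "{p i, p j} \<notin> E"
  proof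
    assume "{p i, p j} \<in> E"
    then have e: "{p i, p (Suc (i + (j - Suc i)))} \<in> E" using ij by simp
    have "i + (j - Suc i) < m" using ij by simp
    from shortest[OF walk_via_shortcut[OF w this e]] ij show False by simp
  qed
next
  fix i j assume ij: "i < j" "j \<le> m"
  show "p i \<noteq> p j"
  proof
    assume eq: "p i = p j"
    show False
    proof (cases "j = m")
      case True
      then have "p i = t" using w eq by (simp add: walk_via_def)
      from shortest[OF walk_via_truncate[OF w _ this]] ij show False by simp
    next
      case False
      then have e: "{p i, p (Suc (i + (j - i)))} \<in> E" using w eq ij by (simp add: walk_via_def)
      have "i + (j - i) < m" using ij False by simp
      from shortest[OF walk_via_shortcut[OF w this e]] ij False show False by simp
    qed
  qed
qed

lemma shortest_walk_via_exists:
  assumes "walk_via E C s t p m"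
  obtains q n where "walk_via E C s t q n" "\<And>q' n'. walk_via E C s t q' n' \<Longrightarrow> n \<le> n'"
  using ex_has_least_nat[of "\<lambda>(q, n). walk_via E C s t q n" "(p, m)" snd] assms by force

lemma induced_path_adj_iff:
  assumes sg: "simple_graph V E"
    and path: "\<And>i. i < m \<Longrightarrow> {p i, p (Suc i)} \<in> E"
    and chordless: "\<And>i j. Suc i < j \<Longrightarrow> j \<le> m \<Longrightarrow> {p i, p j} \<notin> E"
    and "i \<le> m" "j \<le> m"
  shows "{p i, p j} \<in> E \<longleftrightarrow> j = Suc i \<or> i = Suc j"
proof (cases i j rule: linorder_cases)
  case less
  then show ?thesis using assms(4,5) path chordless[of i j] by (cases "j = Suc i") auto
next
  case equal
  then show ?thesis using simple_graph_singleton_notin[OF sg] by simp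
next
  case greater
  then show ?thesis
    using assms(4,5) path chordless[of j i] by (cases "i = Suc j") (auto simp: insert_commute)
qed

lemma hole_from_induced_path:
  fixes p :: "nat \<Rightarrow> 'a"
  assumes sg: "simple_graph V E" and m: "2 \<le> m"
    and path: "\<And>i. i < m \<Longrightarrow> {p i, p (Suc i)} \<in> E"
    and distinct: "\<And>i j. i < j \<Longrightarrow> j \<le> m \<Longrightarrow> p i \<noteq> p j"
    and chordless: "\<And>i j. Suc i < j \<Longrightarrow> j \<le> m \<Longrightarrow> {p i, p j} \<notin> E"
    and p_V: "\<And>i. i \<le> m \<Longrightarrow> p i \<in> V" and a_V: "a \<in> V"
    and a_p: "\<And>i. i \<le> m \<Longrightarrow> a \<noteq> p i"
    and a_adj: "\<And>i. i \<le> m \<Longrightarrow> {a, p i} \<in> E \<longleftrightarrow> i = 0 \<or> i = m"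
  shows "has_hole V E"
proof -
  define f where "f i = (if i \<le> m then p i else a)" for i
  have f_neq: "f i \<noteq> f j" if "i < j" "j < m + 2" for i j
    using that distinct[of i j] a_p[of i] by (cases "j \<le> m") (auto simp: f_def)
  have f_adj: "{f i, f j} \<in> E \<longleftrightarrow> (j = Suc i \<or> i = Suc j \<or> (i = 0 \<and> j = m + 1) \<or> (j = 0 \<and> i = m + 1))"
    if ij: "i < m + 2" "j < m + 2" for i j
  proof -
    consider "i \<le> m" "j \<le> m" | "i \<le> m" "j = m + 1" | "i = m + 1" "j \<le> m" | "i = m + 1" "j = m + 1"
      using ij by linarith
    then show ?thesis
    proof cases
      case 1
      then show ?thesis
        using induced_path_adj_iff[where p = p and m = m and i = i and j = j, OF sg path chordless]
        by (auto simp: f_def)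
    next
      case 2
      then show ?thesis using a_adj[of i] by (auto simp: f_def insert_commute)
    next
      case 3
      then show ?thesis using a_adj[of j] by (auto simp: f_def)
    next
      case 4
      then show ?thesis using simple_graph_singleton_notin[OF sg, of a] by (simp add: f_def)
    qed
  qed
  have "hole V E f (m + 2)"
    unfolding hole_def
  proof (intro conjI sg allI impI)
    show "inj_on f {..<m + 2}"
      by (rule inj_onI) (metis f_neq lessThan_iff linorder_neqE_nat)
    show "f ` {..<m + 2} \<subseteq> V" using p_V a_V by (auto simp: f_def)
    fix i j assume ij: "i < m + 2" "j < m + 2"
    show "{f i, f j} \<in> E \<longleftrightarrow> (j = Suc i mod (m + 2) \<or> i = Suc j mod (m + 2))"
      unfolding cyclic_succ_iff[OF ij] f_adj[OF ij] by simp
  qed (use m in simp)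
  then show ?thesis using has_hole_iff[OF sg] by blast
qed


definition adjacent_in :: "'a set set \<Rightarrow> 'a set \<Rightarrow> 'a \<Rightarrow> 'a \<Rightarrow> bool" where
  "adjacent_in E W p q \<longleftrightarrow> p \<in> W \<and> q \<in> W \<and> {p, q} \<in> E"

lemma walk_via_through:
  assumes "{s, c1} \<in> E" "{c2, t} \<in> E" "c1 \<in> W" "(adjacent_in E W)\<^sup>*\<^sup>* c1 c2"
  obtains p m where "walk_via E W s t p m"
proof -
  obtain g n where g: "g 0 = c1" "g n = c2" "\<forall>i<n. adjacent_in E W (g i) (g (Suc i))"
    using assms(4) by (auto simp: rtranclp_power relpowp_fun_conv)
  have g_W: "g i \<in> W" if "i \<le> n" for i
  proof (cases "i < n")
    case False
    then have "i = n" using that by simp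
    then show ?thesis
      using g assms(3) spec[OF g(3), of "n - 1"] by (cases n) (auto simp: adjacent_in_def)
  qed (use g(3) in \<open>auto simp: adjacent_in_def\<close>)
  define p where "p i = (if i = 0 then s else if i \<le> Suc n then g (i - 1) else t)" for i
  have "walk_via E W s t p (n + 2)"
    unfolding walk_via_def
  proof (intro conjI allI impI)
    fix i assume i: "i < n + 2"
    consider "i = 0" | "0 < i" "i \<le> n" | "i = Suc n" using i by linarith
    then show "{p i, p (Suc i)} \<in> E"
    proof cases
      case 2
      then show ?thesis using g(3)[rule_format, of "i - 1"] by (auto simp: p_def adjacent_in_def)
    qed (use assms(1,2) g in \<open>auto simp: p_def insert_commute\<close>)
  next
    fix i assume "0 < i \<and> i < n + 2"
    then show "p i \<in> W" using g_W by (auto simp: p_def)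
  qed (simp_all add: p_def)
  then show ?thesis using that by blast
qed

definition non_neighbours :: "'a set \<Rightarrow> 'a set set \<Rightarrow> 'a \<Rightarrow> 'a set" where
  "non_neighbours V E a = {w \<in> V. w \<noteq> a \<and> {a, w} \<notin> E}"

text \<open>A shortest path from \<open>s\<close> to \<open>t\<close> through non-neighbours of \<open>a\<close>, closed up through \<open>a\<close>,
  is a hole.\<close>
lemma hole_if_neighbours_joined_outside:
  assumes sg: "simple_graph V E" and a: "a \<in> V"
    and s: "{a, s} \<in> E" and t: "{a, t} \<in> E" and st: "s \<noteq> t" "{s, t} \<notin> E"
    and c1: "{s, c1} \<in> E" "c1 \<in> non_neighbours V E a" and c2: "{c2, t} \<in> E"
    and joined: "(adjacent_in E (non_neighbours V E a))\<^sup>*\<^sup>* c1 c2"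
  shows "has_hole V E"
proof -
  let ?W = "non_neighbours V E a"
  obtain q n where "walk_via E ?W s t q n"
    using walk_via_through[OF c1(1) c2(1) c1(2) joined] .
  then obtain p m where w: "walk_via E ?W s t p m"
    and shortest: "\<And>q' n'. walk_via E ?W s t q' n' \<Longrightarrow> m \<le> n'"
    by (rule shortest_walk_via_exists) blast
  have ends: "p 0 = s" "p m = t" and inner: "\<And>i. 0 < i \<Longrightarrow> i < m \<Longrightarrow> p i \<in> ?W"
    using w by (auto simp: walk_via_def)
  have "s \<in> V" "t \<in> V" "s \<noteq> a" "t \<noteq> a"
    using s t simple_graph_adj_in_V[OF sg] simple_graph_singleton_notin[OF sg, of a] by auto
  have "m \<noteq> 0"
  proof
    assume "m = 0"
    then show False using ends st(1) by simp
  qed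
  moreover have "m \<noteq> 1" using ends st(2) w by (auto simp: walk_via_def)
  ultimately have m: "2 \<le> m" by simp
  show ?thesis
  proof (rule hole_from_induced_path[OF sg m _ shortest_walk_via_distinct[OF w shortest]
        shortest_walk_via_chordless[OF w shortest] _ a])
    show "{p i, p (Suc i)} \<in> E" if "i < m" for i using w that by (simp add: walk_via_def)
    fix i assume "i \<le> m"
    then consider "i = 0" | "i = m" | "0 < i" "i < m" by linarith
    then have "p i \<in> V \<and> a \<noteq> p i \<and> ({a, p i} \<in> E \<longleftrightarrow> i = 0 \<or> i = m)"
    proof cases
      case 1
      then show ?thesis using ends \<open>s \<in> V\<close> \<open>s \<noteq> a\<close> s by auto
    next
      case 2
      then show ?thesis using ends \<open>t \<in> V\<close> \<open>t \<noteq> a\<close> t by auto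
    next
      case 3
      then show ?thesis using inner[OF 3] by (auto simp: non_neighbours_def)
    qed
    then show "p i \<in> V" "a \<noteq> p i" "{a, p i} \<in> E \<longleftrightarrow> i = 0 \<or> i = m" by auto
  qed
qed

definition simplicial :: "'a set \<Rightarrow> 'a set set \<Rightarrow> 'a \<Rightarrow> bool" where
  "simplicial V E v \<longleftrightarrow> v \<in> V \<and> (\<forall>u w. {v, u} \<in> E \<longrightarrow> {v, w} \<in> E \<longrightarrow> u \<noteq> w \<longrightarrow> {u, w} \<in> E)"

lemma simplicial_if_complete:
  assumes "simple_graph V E" "v \<in> V" "\<forall>p\<in>V. \<forall>q\<in>V. p \<noteq> q \<longrightarrow> {p, q} \<in> E"
  shows "simplicial V E v"
  unfolding simplicial_def using assms(2,3) simple_graph_adj_in_V[OF assms(1)] by blast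

lemma simplicial_from_induced:
  assumes "W \<subseteq> V" "s \<in> W" "\<forall>u. {s, u} \<in> E \<longrightarrow> u \<in> W" "simplicial W (edges_in E W) s"
  shows "simplicial V E s"
  using assms unfolding simplicial_def edges_in_doubleton_iff by blast

text \<open>Of two non-adjacent simplicial vertices at most one lies in a given clique.\<close>
lemma simplicial_outside_clique:
  assumes sg: "simple_graph V E"
    and dirac: "\<forall>a\<in>V. non_neighbours V E a \<noteq> {} \<longrightarrow> (\<exists>s\<in>non_neighbours V E a. simplicial V E s)"
    and S: "\<forall>s\<in>S. \<forall>t\<in>S. s \<noteq> t \<longrightarrow> {s, t} \<in> E" and c: "c \<in> V - S"
  shows "\<exists>s\<in>V - S. simplicial V E s"
proof (cases "\<forall>p\<in>V. \<forall>q\<in>V. p \<noteq> q \<longrightarrow> {p, q} \<in> E")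
  case True
  then show ?thesis using simplicial_if_complete[OF sg _ True] c by blast
next
  case False
  then obtain p q where "p \<in> V" "q \<in> non_neighbours V E p"
    by (auto simp: non_neighbours_def)
  then obtain s1 where s1: "s1 \<in> non_neighbours V E p" "simplicial V E s1"
    using dirac by blast
  show ?thesis
  proof (cases "s1 \<in> S")
    case True
    have "p \<in> non_neighbours V E s1"
      using s1(1) \<open>p \<in> V\<close> by (auto simp: non_neighbours_def insert_commute)
    then obtain s2 where s2: "s2 \<in> non_neighbours V E s1" "simplicial V E s2"
      using dirac s1(1) by (force simp: non_neighbours_def)
    then have "s2 \<notin> S" using S True by (auto simp: non_neighbours_def)
    then show ?thesis using s2 by (auto simp: non_neighbours_def)
  qed (use s1 in \<open>auto simp: non_neighbours_def\<close>)
qed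

definition component :: "'a set set \<Rightarrow> 'a set \<Rightarrow> 'a \<Rightarrow> 'a set" where
  "component E W b = {w. (adjacent_in E W)\<^sup>*\<^sup>* b w}"

lemma component_subset: "b \<in> W \<Longrightarrow> component E W b \<subseteq> W"
proof
  fix w assume b: "b \<in> W" and "w \<in> component E W b"
  then have "(adjacent_in E W)\<^sup>*\<^sup>* b w" by (simp add: component_def)
  then show "w \<in> W" using b by (induction rule: rtranclp_induct) (auto simp: adjacent_in_def)
qed

lemma component_closed:
  assumes "b \<in> W" "c \<in> component E W b" "w \<in> W" "{c, w} \<in> E"
  shows "w \<in> component E W b"
proof -
  have "adjacent_in E W c w"
    using assms component_subset[OF assms(1)] by (auto simp: adjacent_in_def)
  then show ?thesis using assms(2) by (simp add: component_def)
qed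

lemma component_joined:
  assumes "c1 \<in> component E W b" "c2 \<in> component E W b"
  shows "(adjacent_in E W)\<^sup>*\<^sup>* c1 c2"
proof -
  have "symp (adjacent_in E W)" by (auto simp: symp_def adjacent_in_def insert_commute)
  then have "(adjacent_in E W)\<^sup>*\<^sup>* c1 b"
    using assms(1) by (auto simp: component_def intro: sympD[OF symp_rtranclp])
  then show ?thesis using assms(2) by (simp add: component_def)
qed

text \<open>Dirac's lemma, in the form needed for the induction.  Let \<open>C\<close> be the component of \<open>b\<close> among
  the non-neighbours of \<open>a\<close>, and \<open>S\<close> the set of vertices outside \<open>C\<close> adjacent to \<open>C\<close>.  Then \<open>S\<close>
  consists of neighbours of \<open>a\<close> and is a clique, so the smaller graph on \<open>C \<union> S\<close> has a simplicial
  vertex in \<open>C\<close>, whose neighbourhood is the same in the whole graph.\<close>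
lemma exists_simplicial_non_neighbour:
  assumes "simple_graph V E" "\<not> has_hole V E" "a \<in> V" "b \<in> non_neighbours V E a"
  shows "\<exists>s\<in>non_neighbours V E a. simplicial V E s"
  using assms
proof (induction "card V" arbitrary: V E a b rule: less_induct)
  case less
  note sg = less.prems(1) and no_hole = less.prems(2) and a = less.prems(3) and b = less.prems(4)
  let ?W = "non_neighbours V E a"
  define C where "C = component E ?W b"
  define S where "S = {s \<in> V - C. \<exists>c\<in>C. {s, c} \<in> E}"
  define V' where "V' = C \<union> S"
  let ?E' = "edges_in E V'"
  have C_W: "C \<subseteq> ?W" using component_subset[OF b] by (simp add: C_def)
  have S_adj_a: "{a, s} \<in> E" if s_S: "s \<in> S" for s
  proof -
    obtain c where c: "c \<in> C" "{s, c} \<in> E" and s: "s \<in> V" "s \<notin> C"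
      using s_S by (auto simp: S_def)
    have "s \<notin> ?W"
      using component_closed[OF b, where c = c and w = s] c s by (auto simp: C_def insert_commute)
    moreover have "s \<noteq> a" using c C_W by (auto simp: non_neighbours_def insert_commute)
    ultimately show ?thesis using s by (simp add: non_neighbours_def)
  qed
  have S_clique: "\<forall>s\<in>S. \<forall>t\<in>S. s \<noteq> t \<longrightarrow> {s, t} \<in> E"
  proof (intro ballI impI, rule ccontr)
    fix s t assume st: "s \<in> S" "t \<in> S" "s \<noteq> t" and non_adj: "{s, t} \<notin> E"
    obtain c1 where c1: "c1 \<in> C" "{s, c1} \<in> E" using st(1) by (auto simp: S_def)
    obtain c2 where c2: "c2 \<in> C" "{c2, t} \<in> E" using st(2) by (auto simp: S_def insert_commute)
    have "has_hole V E"
      using hole_if_neighbours_joined_outside[OF sg a S_adj_a[OF st(1)] S_adj_a[OF st(2)] st(3)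
          non_adj c1(2) _ c2(2)] component_joined[OF c1(1)[unfolded C_def] c2(1)[unfolded C_def]]
        c1(1) C_W
      by blast
    then show False using no_hole by simp
  qed
  have V'_V: "V' \<subseteq> V" using C_W by (auto simp: V'_def S_def non_neighbours_def)
  have "a \<notin> V'"
    using C_W S_adj_a[of a] simple_graph_singleton_notin[OF sg, of a]
    by (auto simp: V'_def non_neighbours_def)
  then have card: "card V' < card V"
    using V'_V a by (intro psubset_card_mono simple_graph_finite[OF sg]) blast
  have sg': "simple_graph V' ?E'" by (rule simple_graph_induced[OF sg V'_V])
  have no_hole': "\<not> has_hole V' ?E'" using has_hole_induced[OF _ V'_V] no_hole by blast
  have IH: "\<forall>x\<in>V'. non_neighbours V' ?E' x \<noteq> {} \<longrightarrow> (\<exists>s\<in>non_neighbours V' ?E' x. simplicial V' ?E' s)"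
    using less.hyps[OF card sg' no_hole'] by blast
  have "b \<in> V' - S" by (simp add: V'_def S_def C_def component_def)
  moreover have "\<forall>s\<in>S. \<forall>t\<in>S. s \<noteq> t \<longrightarrow> {s, t} \<in> ?E'"
    using S_clique by (auto simp: edges_in_doubleton_iff V'_def)
  ultimately obtain s where "s \<in> V' - S" "simplicial V' ?E' s"
    using simplicial_outside_clique[OF sg' IH] by blast
  then have s: "s \<in> C" "simplicial V' ?E' s" by (auto simp: V'_def)
  have "u \<in> V'" if "{s, u} \<in> E" for u
    using that s(1) simple_graph_adj_in_V[OF sg that] by (auto simp: V'_def S_def insert_commute)
  then have "simplicial V E s" using simplicial_from_induced[OF V'_V] s by (auto simp: V'_def)
  then show ?case using s(1) C_W by blast
qed

lemma exists_simplicial: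
  assumes "simple_graph V E" "\<not> has_hole V E" "V \<noteq> {}"
  obtains v where "simplicial V E v"
proof (cases "\<exists>a\<in>V. non_neighbours V E a \<noteq> {}")
  case True
  then show ?thesis using exists_simplicial_non_neighbour[OF assms(1,2)] that by blast
next
  case False
  then have "\<forall>p\<in>V. \<forall>q\<in>V. p \<noteq> q \<longrightarrow> {p, q} \<in> E" by (auto simp: non_neighbours_def)
  then show ?thesis using simplicial_if_complete[OF assms(1)] assms(3) that by blast
qed

section \<open>Deleting a simplicial vertex\<close>

lemma co_2_plex_insert:
  assumes sg: "simple_graph V E" and S: "co_2_plex V E S" and v: "v \<in> V" "v \<notin> S"
    and nbrs: "S \<inter> {u. {v, u} \<in> E} = {} \<or> (\<exists>u. S \<inter> {u. {v, u} \<in> E} = {u} \<and> isolated_in E S u)"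
  shows "co_2_plex V E (insert v S)"
  unfolding co_2_plex_def
proof (intro conjI ballI)
  show "insert v S \<subseteq> V" using S v by (auto simp: co_2_plex_def)
  fix w assume w: "w \<in> insert v S"
  have card_nbrs: "card (S \<inter> {u. {v, u} \<in> E}) \<le> 1" using nbrs by auto
  show "card {t \<in> insert v S. {t, w} \<in> E} \<le> 1"
  proof (cases "w = v")
    case True
    then have "{t \<in> insert v S. {t, w} \<in> E} = S \<inter> {u. {v, u} \<in> E}"
      using simple_graph_singleton_notin[OF sg, of v] by (auto simp: insert_commute)
    then show ?thesis using card_nbrs by simp
  next
    case False
    then have "w \<in> S" using w by simp
    show ?thesis
    proof (cases "{v, w} \<in> E")
      case True
      then obtain u where "S \<inter> {u. {v, u} \<in> E} = {u}" "isolated_in E S u"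
        using nbrs \<open>w \<in> S\<close> by blast
      then have "isolated_in E S w" using True \<open>w \<in> S\<close> by auto
      then have "{t \<in> insert v S. {t, w} \<in> E} = {v}" using True by (auto simp: isolated_in_def)
      then show ?thesis by simp
    next
      case False
      then have "{t \<in> insert v S. {t, w} \<in> E} = {t \<in> S. {t, w} \<in> E}" by auto
      then show ?thesis using S \<open>w \<in> S\<close> by (simp add: co_2_plex_def)
    qed
  qed
qed

lemma ratio_in_unit_interval:
  fixes r a :: real
  assumes "0 \<le> r" "r \<le> a"
  obtains t where "0 \<le> t" "t \<le> 1" "t * a = r"
proof (cases "a = 0")
  case True
  then show ?thesis using assms that[of 0] by simp
next
  case False
  then show ?thesis using assms that[of "r / a"] by simp
qed

locale simplicial_vertex =
  fixes V :: "'a set" and E :: "'a set set" and v :: 'a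
  assumes simple: "simple_graph V E" and simplicial: "simplicial V E v"
begin

abbreviation nbhd :: "'a set" where
  "nbhd \<equiv> {u. {v, u} \<in> E}"

lemma v_in_V: "v \<in> V"
  using simplicial by (simp add: simplicial_def)

lemma nbhd_subset: "nbhd \<subseteq> V - {v}"
  using simple_graph_adj_in_V[OF simple] simple_graph_singleton_notin[OF simple, of v] by auto

lemma finite_nbhd: "finite nbhd"
  using nbhd_subset simple_graph_finite[OF simple] finite_subset by blast

lemma nbhd_adj: "u \<in> nbhd \<Longrightarrow> w \<in> nbhd \<Longrightarrow> u \<noteq> w \<Longrightarrow> {u, w} \<in> E"
  using simplicial by (simp add: simplicial_def)

lemma clique_nbhd: "clique V E nbhd"
  using nbhd_subset nbhd_adj by (auto simp: clique_def)

lemma clique_nbhd_delete: "clique (V - {v}) (edges_in E (V - {v})) nbhd"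
  using nbhd_subset nbhd_adj by (auto simp: clique_def edges_in_doubleton_iff)

lemma maximal_clique_closed_nbhd: "maximal_clique V E (insert v nbhd)"
proof -
  have "{p, q} \<in> E" if "p \<in> insert v nbhd" "q \<in> insert v nbhd" "p \<noteq> q" for p q
    using that nbhd_adj[of p q] by (auto simp: insert_commute)
  moreover have "insert v nbhd \<subseteq> V" using v_in_V nbhd_subset by blast
  ultimately have "clique V E (insert v nbhd)" by (simp add: clique_def)
  moreover have "K \<subseteq> insert v nbhd" if "clique V E K" "insert v nbhd \<subseteq> K" for K
  proof
    fix z assume "z \<in> K"
    then show "z \<in> insert v nbhd"
      using that by (cases "z = v") (auto simp: clique_def insert_commute)
  qed
  ultimately show ?thesis by (auto simp: maximal_clique_def)
qed

lemma maximal_clique_delete: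
  assumes K: "maximal_clique (V - {v}) (edges_in E (V - {v})) K"
  shows "maximal_clique V E K \<or> K = nbhd"
proof (cases "maximal_clique V E K")
  case not_max: False
  have K_sub: "K \<subseteq> V - {v}" using K by (simp add: maximal_clique_def clique_def)
  have "clique V E K" using K unfolding maximal_clique_def clique_def edges_in_def by blast
  then obtain K' where K': "clique V E K'" "K \<subseteq> K'" "K' \<noteq> K"
    using not_max unfolding maximal_clique_def by blast
  have "v \<in> K'"
  proof (rule ccontr)
    assume "v \<notin> K'"
    then have "clique (V - {v}) (edges_in E (V - {v})) K'"
      using K'(1) unfolding clique_def edges_in_def by blast
    then show False using K K'(2,3) unfolding maximal_clique_def by blast
  qed
  have "K \<subseteq> nbhd"
  proof
    fix z assume "z \<in> K"
    then have "{z, v} \<in> E" using K' K_sub \<open>v \<in> K'\<close> unfolding clique_def by blast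
    then show "z \<in> nbhd" by (simp add: insert_commute)
  qed
  then show ?thesis using K clique_nbhd_delete unfolding maximal_clique_def by blast
qed simp

lemma delta_v: "delta E v = (\<lambda>u. {v, u}) ` nbhd"
proof -
  have "e \<in> (\<lambda>u. {v, u}) ` nbhd" if e: "e \<in> E" "v \<in> e" for e
  proof -
    obtain p q where "e = {p, q}" using simple_graph_edgeE[OF simple e(1)] by metis
    then obtain u where "e = {v, u}" using e(2) by (auto simp: insert_commute)
    then show ?thesis using e(1) by blast
  qed
  then show ?thesis by (auto simp: delta_def)
qed

lemma sum_delta_v: "(\<Sum>e\<in>delta E v. g e) = (\<Sum>u\<in>nbhd. g {v, u})"
proof -
  have "inj_on (\<lambda>u. {v, u}) nbhd" by (auto simp: inj_on_def doubleton_eq_iff)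
  then show ?thesis by (simp add: delta_v sum.reindex)
qed

lemma clique_ineq_nbhd:
  assumes "(x, y) \<in> clique_polyhedron V E"
  shows "(\<Sum>u\<in>nbhd. x u) - (\<Sum>e\<in>edges_in E nbhd. y e) \<le> 1 - (x v - (\<Sum>e\<in>delta E v. y e))"
proof -
  have v: "v \<notin> nbhd" using nbhd_subset by blast
  have "edges_in E (insert v nbhd) = edges_in E nbhd \<union> delta E v"
    using delta_v by (auto simp: edges_in_def delta_def)
  moreover have "edges_in E nbhd \<inter> delta E v = {}" using v by (auto simp: edges_in_def delta_def)
  moreover have "finite (edges_in E nbhd)" "finite (delta E v)"
    using simple_graph_finite_edges[OF simple] by (auto simp: edges_in_def delta_def)
  ultimately have "(\<Sum>e\<in>edges_in E (insert v nbhd). y e)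
      = (\<Sum>e\<in>edges_in E nbhd. y e) + (\<Sum>e\<in>delta E v. y e)"
    by (simp add: sum.union_disjoint)
  moreover have "(\<Sum>u\<in>insert v nbhd. x u) = x v + (\<Sum>u\<in>nbhd. x u)"
    using v finite_nbhd by simp
  moreover have "(\<Sum>u\<in>insert v nbhd. x u) - (\<Sum>e\<in>edges_in E (insert v nbhd). y e) \<le> 1"
    using assms maximal_clique_closed_nbhd by (auto simp: clique_polyhedron_def)
  ultimately show ?thesis by simp
qed

lemma restrict_in_clique_polyhedron:
  assumes Q: "(x, y) \<in> clique_polyhedron V E"
  shows "(x(v := 0), \<lambda>e. if v \<in> e then 0 else y e)
           \<in> clique_polyhedron (V - {v}) (edges_in E (V - {v}))"
proof -
  let ?V' = "V - {v}" and ?E' = "edges_in E (V - {v})" and ?y' = "\<lambda>e. if v \<in> e then 0 else y e"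
  have x0: "\<forall>w. w \<notin> V \<longrightarrow> x w = 0" and y0: "\<forall>e. e \<notin> E \<longrightarrow> y e = 0"
    and deg: "\<forall>w\<in>V. (\<Sum>e\<in>delta E w. y e) \<le> x w"
    and cl: "\<forall>K. maximal_clique V E K \<longrightarrow> (\<Sum>w\<in>K. x w) - (\<Sum>e\<in>edges_in E K. y e) \<le> 1"
    using Q by (auto simp: clique_polyhedron_def)
  have y_nonneg: "0 \<le> y e" for e
    using Q by (cases "e \<in> E") (auto simp: clique_polyhedron_def)
  have "?y' e = 0" if "e \<notin> ?E'" for e
    using that y0 simple_graph_edges_subset[OF simple] by (auto simp: edges_in_def)
  moreover have "(\<Sum>e\<in>delta ?E' w. ?y' e) \<le> (x(v := 0)) w" if w: "w \<in> ?V'" for w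
  proof -
    have "(\<Sum>e\<in>delta ?E' w. ?y' e) = (\<Sum>e\<in>delta ?E' w. y e)"
      by (intro sum.cong) (auto simp: delta_def edges_in_def)
    also have "\<dots> \<le> (\<Sum>e\<in>delta E w. y e)"
      using simple_graph_finite_edges[OF simple] y_nonneg
      by (intro sum_mono2) (auto simp: delta_def edges_in_def)
    also have "\<dots> \<le> (x(v := 0)) w" using deg w by auto
    finally show ?thesis .
  qed
  moreover have "(\<Sum>w\<in>K. (x(v := 0)) w) - (\<Sum>e\<in>edges_in ?E' K. ?y' e) \<le> 1"
    if K: "maximal_clique ?V' ?E' K" for K
  proof -
    have K_sub: "K \<subseteq> ?V'" using K by (simp add: maximal_clique_def clique_def)
    have "(\<Sum>w\<in>K. (x(v := 0)) w) = (\<Sum>w\<in>K. x w)" using K_sub by (intro sum.cong) auto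
    moreover have "edges_in ?E' K = edges_in E K" using K_sub by (auto simp: edges_in_def)
    moreover have "(\<Sum>e\<in>edges_in E K. ?y' e) = (\<Sum>e\<in>edges_in E K. y e)"
      using K_sub by (intro sum.cong) (auto simp: edges_in_def)
    moreover have "(\<Sum>w\<in>K. x w) - (\<Sum>e\<in>edges_in E K. y e) \<le> 1"
      using maximal_clique_delete[OF K] cl clique_ineq_nbhd[OF Q] deg v_in_V by fastforce
    ultimately show ?thesis by simp
  qed
  ultimately show ?thesis
    using x0 y_nonneg by (auto simp: clique_polyhedron_def)
qed

lemma isolated_nbhd_inter:
  assumes "u \<in> nbhd" "isolated_in E S u"
  shows "S \<inter> nbhd = {u}"
proof -
  have "w = u" if "w \<in> S" "w \<in> nbhd" for w
    using that assms nbhd_adj[of w u] by (auto simp: isolated_in_def)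
  then show ?thesis using assms by (auto simp: isolated_in_def)
qed

text \<open>The probability with which a co-2-plex \<open>S\<close> of \<open>G - v\<close> is extended by \<open>v\<close>: \<open>v\<close> may be added
  if \<open>S\<close> avoids the neighbourhood of \<open>v\<close>, or if it meets it in a single vertex \<open>u\<close> isolated in \<open>S\<close>.
  At most one summand is non-zero.\<close>
definition lift_coeff :: "real \<Rightarrow> ('a \<Rightarrow> real) \<Rightarrow> 'a set \<Rightarrow> real" where
  "lift_coeff \<alpha> \<beta> S =
     (if S \<inter> nbhd = {} then \<alpha> else 0) + (\<Sum>u\<in>nbhd. if isolated_in E S u then \<beta> u else 0)"

lemma lift_coeff_isolated:
  assumes "u \<in> nbhd" "isolated_in E S u"
  shows "lift_coeff \<alpha> \<beta> S = \<beta> u"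
proof -
  have S: "S \<inter> nbhd = {u}" using isolated_nbhd_inter[OF assms] .
  have "(\<Sum>w\<in>nbhd. if isolated_in E S w then \<beta> w else 0) = (\<Sum>w\<in>nbhd. if w = u then \<beta> u else 0)"
    using S assms(2) by (intro sum.cong) (auto simp: isolated_in_def)
  then show ?thesis using S assms(1) finite_nbhd by (simp add: lift_coeff_def)
qed

lemma lift_coeff_cases:
  obtains (avoids) "S \<inter> nbhd = {}" "lift_coeff \<alpha> \<beta> S = \<alpha>"
    | (isolated) u where "u \<in> nbhd" "isolated_in E S u" "S \<inter> nbhd = {u}" "lift_coeff \<alpha> \<beta> S = \<beta> u"
    | (zero) "lift_coeff \<alpha> \<beta> S = 0"
proof (cases "\<exists>u\<in>nbhd. isolated_in E S u")
  case True
  then show ?thesis using isolated isolated_nbhd_inter lift_coeff_isolated by blast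
next
  case False
  then have "(\<Sum>u\<in>nbhd. if isolated_in E S u then \<beta> u else 0) = 0" by (intro sum.neutral) auto
  then show ?thesis using avoids zero by (cases "S \<inter> nbhd = {}") (auto simp: lift_coeff_def)
qed

lemma lift_coeff_indicator:
  assumes "u \<in> nbhd"
  shows "lift_coeff \<alpha> \<beta> S * indicator S u = (if isolated_in E S u then \<beta> u else 0)"
proof (cases "isolated_in E S u")
  case True
  then show ?thesis using lift_coeff_isolated[OF assms] by (simp add: isolated_in_def)
next
  case False
  have "lift_coeff \<alpha> \<beta> S = 0" if "u \<in> S"
  proof (cases rule: lift_coeff_cases[where S = S and \<alpha> = \<alpha> and \<beta> = \<beta>])
    case avoids
    then show ?thesis using that assms by blast
  next
    case (isolated w)
    then have "u \<in> {w}" using that assms by (metis IntI)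
    then show ?thesis using isolated(2) False by simp
  next
    case zero
    then show ?thesis .
  qed
  then show ?thesis using False by (cases "u \<in> S") auto
qed

lemma sum_lift_coeff:
  "(\<Sum>S\<in>C. lam S * lift_coeff \<alpha> \<beta> S)
     = \<alpha> * (\<Sum>S\<in>C. if S \<inter> nbhd = {} then lam S else 0)
       + (\<Sum>u\<in>nbhd. \<beta> u * (\<Sum>S\<in>C. if isolated_in E S u then lam S else 0))"
proof -
  have "lam S * lift_coeff \<alpha> \<beta> S = \<alpha> * (if S \<inter> nbhd = {} then lam S else 0)
      + (\<Sum>u\<in>nbhd. \<beta> u * (if isolated_in E S u then lam S else 0))" for S
    by (auto simp: lift_coeff_def algebra_simps sum_distrib_left intro!: sum.cong)
  then show ?thesis by (simp add: sum.distrib sum.swap[of _ C] sum_distrib_left)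
qed

lemma lift_coeff_bounds:
  assumes "0 \<le> \<alpha>" "\<alpha> \<le> 1" "\<forall>u\<in>nbhd. 0 \<le> \<beta> u \<and> \<beta> u \<le> 1"
  shows "0 \<le> lift_coeff \<alpha> \<beta> S" "lift_coeff \<alpha> \<beta> S \<le> 1"
  using assms by (cases rule: lift_coeff_cases[where S = S and \<alpha> = \<alpha> and \<beta> = \<beta>]; simp)+

lemma co_2_plex_insert_if_lift_coeff:
  assumes "co_2_plex V E S" "v \<notin> S" "lift_coeff \<alpha> \<beta> S \<noteq> 0"
  shows "co_2_plex V E (insert v S)"
proof (cases rule: lift_coeff_cases[where S = S and \<alpha> = \<alpha> and \<beta> = \<beta>])
  case avoids
  then show ?thesis by (intro co_2_plex_insert[OF simple assms(1) v_in_V assms(2)]) simp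
next
  case (isolated u)
  then show ?thesis by (intro co_2_plex_insert[OF simple assms(1) v_in_V assms(2)]) blast
next
  case zero
  then show ?thesis using assms(3) by simp
qed

lemma sum_delta_nbhd_avoiding_v:
  fixes y :: "'a set \<Rightarrow> real"
  assumes "u \<in> nbhd"
  shows "(\<Sum>e\<in>delta E u. if v \<in> e then 0 else y e) = (\<Sum>e\<in>delta E u. y e) - y {v, u}"
proof -
  have fin: "finite (delta E u)" using simple_graph_finite_edges[OF simple] by (simp add: delta_def)
  have vu: "{v, u} \<in> delta E u" using assms by (simp add: delta_def)
  have "u \<noteq> v" using assms nbhd_subset by blast
  have "e = {v, u}" if e: "e \<in> delta E u" "v \<in> e" for e
  proof -
    obtain p q where "e = {p, q}"
      using simple_graph_edgeE[OF simple, of e] e(1) by (metis delta_def mem_Collect_eq)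
    then show ?thesis using e \<open>u \<noteq> v\<close> by (auto simp: delta_def doubleton_eq_iff)
  qed
  then have "(\<Sum>e\<in>delta E u. if v \<in> e then 0 else y e) = (\<Sum>e\<in>delta E u - {{v, u}}. y e)"
    using fin by (intro sum.mono_neutral_cong_right) auto
  then show ?thesis using sum.remove[OF fin vu, of y] by simp
qed

end

locale simplicial_extension = simplicial_vertex +
  fixes x :: "'a \<Rightarrow> real" and y :: "'a set \<Rightarrow> real" and C :: "'a set set" and lam :: "'a set \<Rightarrow> real"
  assumes in_Q: "(x, y) \<in> clique_polyhedron V E"
    and finite_C: "finite C" and C: "\<forall>S\<in>C. co_2_plex V E S \<and> v \<notin> S"
    and lam: "convex_weights C lam"
    and x_restrict: "x(v := 0) = vertex_mix C lam"
    and y_restrict: "(\<lambda>e. if v \<in> e then 0 else y e) = edge_mix E C lam"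
begin

definition avoiding_mass :: real where
  "avoiding_mass = (\<Sum>S\<in>C. if S \<inter> nbhd = {} then lam S else 0)"

definition isolated_mass :: "'a \<Rightarrow> real" where
  "isolated_mass u = (\<Sum>S\<in>C. if isolated_in E S u then lam S else 0)"

lemma C_co_2_plexes: "\<forall>S\<in>C. co_2_plex V E S"
  using C by blast

lemma vertex_mix_eq: "vertex_mix C lam u = (if u = v then 0 else x u)"
  using fun_cong[OF x_restrict, of u] by simp

lemma edge_mix_eq: "edge_mix E C lam e = (if v \<in> e then 0 else y e)"
  using fun_cong[OF y_restrict, of e] by simp

lemma y_nonneg: "0 \<le> y e"
  using in_Q by (cases "e \<in> E") (auto simp: clique_polyhedron_def)

lemma degree_ineq: "w \<in> V \<Longrightarrow> (\<Sum>e\<in>delta E w. y e) \<le> x w"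
  using in_Q by (auto simp: clique_polyhedron_def)

text \<open>This is the clique inequality for the closed neighbourhood of \<open>v\<close>.\<close>
lemma degree_slack_le_avoiding_mass: "x v - (\<Sum>e\<in>delta E v. y e) \<le> avoiding_mass"
proof -
  have "(\<Sum>u\<in>nbhd. vertex_mix C lam u) = (\<Sum>u\<in>nbhd. x u)"
    using nbhd_subset by (intro sum.cong) (auto simp: vertex_mix_eq)
  moreover have "(\<Sum>e\<in>edges_in E nbhd. edge_mix E C lam e) = (\<Sum>e\<in>edges_in E nbhd. y e)"
    using nbhd_subset by (intro sum.cong) (auto simp: edge_mix_eq edges_in_def)
  ultimately have "(\<Sum>u\<in>nbhd. x u) - (\<Sum>e\<in>edges_in E nbhd. y e)
      = (\<Sum>S\<in>C. if nbhd \<inter> S = {} then 0 else lam S)"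
    using clique_functional_mix[OF simple C_co_2_plexes clique_nbhd, of lam] by simp
  also have "\<dots> = sum lam C - avoiding_mass"
    unfolding avoiding_mass_def eq_diff_eq sum.distrib[symmetric] by (rule sum.cong) auto
  also have "\<dots> = 1 - avoiding_mass" using lam by (simp add: convex_weights_def)
  finally show ?thesis using clique_ineq_nbhd[OF in_Q] by simp
qed

text \<open>This is the degree inequality at \<open>u\<close>.\<close>
lemma edge_le_isolated_mass:
  assumes u: "u \<in> nbhd"
  shows "y {v, u} \<le> isolated_mass u"
proof -
  have "u \<noteq> v" "u \<in> V" using u nbhd_subset by auto
  then have "isolated_mass u = x u - (\<Sum>e\<in>delta E u. y e) + y {v, u}"
    using degree_functional_mix[OF simple C_co_2_plexes, of lam u]
      sum_delta_nbhd_avoiding_v[OF u, of y]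
    by (simp add: isolated_mass_def vertex_mix_eq edge_mix_eq)
  then show ?thesis using degree_ineq[OF \<open>u \<in> V\<close>] by simp
qed

lemma lifted_vertex_eq:
  assumes \<alpha>: "\<alpha> * avoiding_mass = x v - (\<Sum>e\<in>delta E v. y e)"
    and \<beta>: "\<forall>u\<in>nbhd. \<beta> u * isolated_mass u = y {v, u}"
  shows "x = (\<lambda>u. vertex_mix C lam u
    + (\<Sum>S\<in>C. lam S * lift_coeff \<alpha> \<beta> S * (indicator (insert v S) u - indicator S u)))"
proof -
  have "(\<Sum>u\<in>nbhd. \<beta> u * isolated_mass u) = (\<Sum>e\<in>delta E v. y e)"
    using \<beta> by (simp add: sum_delta_v)
  then have "(\<Sum>S\<in>C. lam S * lift_coeff \<alpha> \<beta> S) = x v"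
    using sum_lift_coeff[where C = C and lam = lam and \<alpha> = \<alpha> and \<beta> = \<beta>] \<alpha>
    by (simp add: avoiding_mass_def[symmetric] isolated_mass_def[symmetric])
  then show ?thesis
    using C by (auto simp: fun_eq_iff vertex_mix_eq indicator_def intro: sum.cong)
qed

lemma lifted_edge_eq:
  assumes \<beta>: "\<forall>u\<in>nbhd. \<beta> u * isolated_mass u = y {v, u}"
  shows "y = (\<lambda>e. edge_mix E C lam e + (\<Sum>S\<in>C. lam S * lift_coeff \<alpha> \<beta> S *
    (indicator (edges_in E (insert v S)) e - indicator (edges_in E S) e)))"
proof
  fix e
  let ?c = "lift_coeff \<alpha> \<beta>"
  consider "v \<notin> e" | "v \<in> e" "e \<notin> E" | u where "u \<in> nbhd" "e = {v, u}"
    using delta_v by (auto simp: delta_def)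
  then show "y e = edge_mix E C lam e
    + (\<Sum>S\<in>C. lam S * ?c S * (indicator (edges_in E (insert v S)) e - indicator (edges_in E S) e))"
  proof cases
    case 1
    then have "indicator (edges_in E (insert v S)) e = (indicator (edges_in E S) e :: real)" for S
      by (auto simp: edges_in_def indicator_def)
    then show ?thesis using 1 by (simp add: edge_mix_eq)
  next
    case 2
    then show ?thesis using in_Q by (simp add: edge_mix_eq edges_in_def clique_polyhedron_def)
  next
    case 3
    then have "u \<noteq> v" using nbhd_subset by blast
    have "(\<Sum>S\<in>C. lam S * ?c S *
          (indicator (edges_in E (insert v S)) e - indicator (edges_in E S) e))
        = (\<Sum>S\<in>C. lam S * (?c S * indicator S u))"
      using 3 \<open>u \<noteq> v\<close> C by (intro sum.cong) (auto simp: edges_in_def indicator_def)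
    also have "\<dots> = (\<Sum>S\<in>C. \<beta> u * (if isolated_in E S u then lam S else 0))"
      using lift_coeff_indicator[OF 3(1)] by (intro sum.cong) auto
    also have "\<dots> = y e" using 3 \<beta> by (simp add: isolated_mass_def sum_distrib_left)
    finally show ?thesis using 3 by (simp add: edge_mix_eq)
  qed
qed

lemma in_P_xy: "(x, y) \<in> P_xy V E"
proof -
  have "0 \<le> x v - (\<Sum>e\<in>delta E v. y e)" using degree_ineq[OF v_in_V] by simp
  then obtain \<alpha> where \<alpha>: "0 \<le> \<alpha>" "\<alpha> \<le> 1" "\<alpha> * avoiding_mass = x v - (\<Sum>e\<in>delta E v. y e)"
    using degree_slack_le_avoiding_mass by (rule ratio_in_unit_interval)
  have "\<exists>t. 0 \<le> t \<and> t \<le> 1 \<and> t * isolated_mass u = y {v, u}" if "u \<in> nbhd" for u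
    using ratio_in_unit_interval[OF y_nonneg edge_le_isolated_mass[OF that]] by metis
  then obtain \<beta> where \<beta>: "\<forall>u\<in>nbhd. 0 \<le> \<beta> u \<and> \<beta> u \<le> 1 \<and> \<beta> u * isolated_mass u = y {v, u}"
    by metis
  then have \<beta>_mass: "\<forall>u\<in>nbhd. \<beta> u * isolated_mass u = y {v, u}" by blast
  have "\<forall>S\<in>C. 0 \<le> lift_coeff \<alpha> \<beta> S \<and> lift_coeff \<alpha> \<beta> S \<le> 1"
    using lift_coeff_bounds[OF \<alpha>(1,2)] \<beta> by simp
  moreover have "\<forall>S\<in>C. lift_coeff \<alpha> \<beta> S \<noteq> 0 \<longrightarrow> co_2_plex V E (insert v S)"
    using co_2_plex_insert_if_lift_coeff C by simp
  ultimately have "((\<lambda>u. vertex_mix C lam u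
      + (\<Sum>S\<in>C. lam S * lift_coeff \<alpha> \<beta> S * (indicator (insert v S) u - indicator S u))),
    (\<lambda>e. edge_mix E C lam e + (\<Sum>S\<in>C. lam S * lift_coeff \<alpha> \<beta> S *
      (indicator (edges_in E (insert v S)) e - indicator (edges_in E S) e)))) \<in> P_xy V E"
    by (rule insert_mix_in_P_xy[OF simple finite_C C_co_2_plexes lam])
  then show ?thesis
    by (simp only: lifted_vertex_eq[OF \<alpha>(3) \<beta>_mass, symmetric] lifted_edge_eq[OF \<beta>_mass, symmetric])
qed

end

lemma (in simplicial_vertex) lift_from_delete:
  assumes Q: "(x, y) \<in> clique_polyhedron V E"
    and P': "(x(v := 0), \<lambda>e. if v \<in> e then 0 else y e) \<in> P_xy (V - {v}) (edges_in E (V - {v}))"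
  shows "(x, y) \<in> P_xy V E"
proof -
  let ?C = "co_2_plexes (V - {v}) (edges_in E (V - {v}))"
  obtain lam where lam: "convex_weights ?C lam" and x': "x(v := 0) = vertex_mix ?C lam"
    and y': "(\<lambda>e. if v \<in> e then 0 else y e) = edge_mix (edges_in E (V - {v})) ?C lam"
    using P' by (rule mem_P_xyE)
  have sub: "S \<subseteq> V - {v}" if "S \<in> ?C" for S using that by (simp add: co_2_plex_def)
  have "edge_mix (edges_in E (V - {v})) ?C lam = edge_mix E ?C lam"
    unfolding edge_mix_def fun_eq_iff
  proof (intro allI sum.cong refl)
    fix e S assume "S \<in> ?C"
    then show "lam S * indicator (edges_in (edges_in E (V - {v})) S) e
        = lam S * indicator (edges_in E S) e"
      by (simp only: edges_in_edges_in[OF sub])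
  qed
  then have y'': "(\<lambda>e. if v \<in> e then 0 else y e) = edge_mix E ?C lam" using y' by simp
  have "co_2_plex V E S \<and> v \<notin> S" if "S \<in> ?C" for S
    using sub[OF that] co_2_plex_induced_iff[of S "V - {v}" V E] that by blast
  moreover have "finite ?C" by (rule finite_co_2_plexes[OF simple_graph_induced[OF simple]]) blast
  ultimately interpret simplicial_extension V E v x y ?C lam
    using Q lam x' y'' by unfold_locales blast+
  show ?thesis by (rule in_P_xy)
qed

lemma clique_polyhedron_subset_P_xy:
  assumes "simple_graph V E" "\<not> has_hole V E"
  shows "clique_polyhedron V E \<subseteq> P_xy V E"
  using assms
proof (induction "card V" arbitrary: V E rule: less_induct)
  case less
  note sg = less.prems(1) and no_hole = less.prems(2)
  show ?case
  proof (cases "V = {}")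
    case True
    then have "E = {}" using simple_graph_edgeE[OF sg] by blast
    have "(x, y) \<in> P_xy V E" if "(x, y) \<in> clique_polyhedron V E" for x y
    proof -
      have "x = indicator {}" "y = indicator (edges_in E {})"
        using that True \<open>E = {}\<close> by (auto simp: clique_polyhedron_def fun_eq_iff edges_in_def)
      moreover have "co_2_plex V E {}" by (simp add: co_2_plex_def)
      ultimately show ?thesis using incidence_in_P_xy[OF sg] by simp
    qed
    then show ?thesis by auto
  next
    case False
    then obtain v where "simplicial V E v" using exists_simplicial[OF sg no_hole] by blast
    then interpret simplicial_vertex V E v using sg by unfold_locales
    have "card (V - {v}) < card V" by (rule card_Diff1_less[OF simple_graph_finite[OF sg] v_in_V])
    moreover have "simple_graph (V - {v}) (edges_in E (V - {v}))"
      using simple_graph_induced[OF sg] by blast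
    moreover have "\<not> has_hole (V - {v}) (edges_in E (V - {v}))"
      using has_hole_induced no_hole by blast
    ultimately have IH:
      "clique_polyhedron (V - {v}) (edges_in E (V - {v})) \<subseteq> P_xy (V - {v}) (edges_in E (V - {v}))"
      by (rule less.hyps)
    have "(x, y) \<in> P_xy V E" if "(x, y) \<in> clique_polyhedron V E" for x y
      using lift_from_delete[OF that] restrict_in_clique_polyhedron[OF that] IH by blast
    then show ?thesis by auto
  qed
qed

theorem mainTheorem4:
  fixes V :: "'a set" and E :: "'a set set"
  assumes "simple_graph V E" and "connected_graph V E"
  shows "chordal V E \<longleftrightarrow> P_xy V E = clique_polyhedron V E"
proof
  assume "chordal V E"
  then have "\<not> has_hole V E" by (simp add: chordal_def)
  then show "P_xy V E = clique_polyhedron V E"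
    by (intro equalityI P_xy_subset_clique_polyhedron[OF assms(1)]
        clique_polyhedron_subset_P_xy[OF assms(1)])
next
  assume eq: "P_xy V E = clique_polyhedron V E"
  show "chordal V E"
    unfolding chordal_def
  proof
    assume "has_hole V E"
    then obtain f k where "hole V E f k" using has_hole_iff[OF assms(1)] by blast
    then show False using hole.P_xy_neq_clique_polyhedron eq by blast
  qed
qed

end
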